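(* Let $\{x^k\}_k$, $\{z^k\}_k$ be generated by the normal map-based stochastic proximal gradient method described in the context and suppose conditions (A.1), (A.2), (A.3) and (B.1) hold. Assume moreover $\alpha_k\in(0,\mathsf T/5]$ for all $k\in\mathbb N$. Then for all $k\ge1$, \[ \min_{i=0,\dots,k-1}\mathbb E[\|F^\lambda_{\mathrm{nat}}(x^i)\|^2]\le\frac{D_1[H_\xi(z^0)-\bar\psi]}{\sum_{i=0}^{k-1}\alpha_i}+\frac{D_2\sum_{i=0}^{k-1}\alpha_i^2\sigma_i^2}{\sum_{i=0}^{k-1}\alpha_i}, \] where $D_1:=10(1+\lambda\bar\lambda)^2\lambda^2\xi^{-1}$ and $D_2:=\max\{200(1+\lambda\bar\lambda)^2\lambda^2(\mathsf T\xi)^{-1},\,8\lambda^2\bar\lambda^2\mathsf T\}$.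
   Context: Let $\varphi:\mathbb{R}^d\to(-\infty,\infty]$ be convex, lower semicontinuous and proper, let $f:\mathbb{R}^d\to\mathbb{R}$ be continuously differentiable, and set $\psi=f+\varphi$. For $\lambda>0$ let $\mathrm{prox}_{\lambda\varphi}(x)=\operatorname{argmin}_y\{\varphi(y)+\frac{1}{2\lambda}\|x-y\|^2\}$, $\mathrm{env}_{\lambda\varphi}$ the Moreau envelope with $\nabla\mathrm{env}_{\lambda\varphi}(x)=(x-\mathrm{prox}_{\lambda\varphi}(x))/\lambda$, $F^\lambda_{\mathrm{nor}}(z)=\nabla f(\mathrm{prox}_{\lambda\varphi}(z))+\frac1\lambda(z-\mathrm{prox}_{\lambda\varphi}(z))$, $F^\lambda_{\mathrm{nat}}(x)=x-\mathrm{prox}_{\lambda\varphi}(x-\lambda\nabla f(x))$, and the merit function $H_\xi(z)=\psi(\mathrm{prox}_{\lambda\varphi}(z))+\frac{\xi\lambda}2\|F^\lambda_{\mathrm{nor}}(z)\|^2$. Method: on a filtered probability space $(\Omega,\mathcal F,\{\mathcal F_k\}_k,\mathbb P)$, with $\lambda>0$, step sizes $\alpha_k>0$, deterministic $z^0$, $x^0=\mathrm{prox}_{\lambda\varphi}(z^0)$, and $\mathcal F_{k+1}$-measurable random vectors $g^k$, set $z^{k+1}=z^k-\alpha_k(g^k+\nabla\mathrm{env}_{\lambda\varphi}(z^k))$, $x^{k+1}=\mathrm{prox}_{\lambda\varphi}(z^{k+1})$. Let $e^k=g^k-\nabla f(x^k)$. Conditions: (A.1) There is $\bar\psi\in\mathbb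 R$ with $\psi\ge\bar\psi$ on $\mathrm{dom}\,\varphi$. (A.2) $\mathbb E[g^k\mid\mathcal F_k]=\nabla f(x^k)$ a.s. and there is $\{\sigma_k\}_k\subseteq\mathbb R_+$ with $\mathbb E[\|e^k\|^2]\le\sigma_k^2$ for all $k$. (A.3) $\sum_k\alpha_k=\infty$ and $\alpha_k\to0$. (B.1) $\nabla f$ is Lipschitz continuous on $\mathbb R^d$ with modulus $\mathsf L>0$. Constants: $\xi:=(2+2\mathsf L^2\lambda^2)^{-1}$, $\bar\lambda:=(\mathsf L+2\lambda^{-1})\exp(\mathsf L\lambda+2)$, and $\mathsf T:=\sup\{t\ge0:\ t\le\min\{\tfrac{4\lambda}5,1\},\ \tfrac1{2t}\ge\xi(4\mathsf L-\lambda^{-1})+\mathsf L,\ \mathsf L\bar\lambda^2t^2+5\bar\lambda^2t\le\tfrac{8\xi}{25\lambda},\ [\tfrac5t+\mathsf L](1+\bar\lambda t)^2\le\tfrac{10}t\}$. *)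

theory Defs
  imports "HOL-Analysis.Analysis" "HOL-Probability.Probability"
begin

definition ext_convex :: "('a::real_vector \<Rightarrow> ereal) \<Rightarrow> bool" where
  "ext_convex \<phi> \<longleftrightarrow> (\<forall>x y t. 0 \<le> t \<and> t \<le> 1 \<longrightarrow>
      \<phi> ((1 - t) *\<^sub>R x + t *\<^sub>R y) \<le> ereal (1 - t) * \<phi> x + ereal t * \<phi> y)"

definition ext_lsc :: "('a::topological_space \<Rightarrow> ereal) \<Rightarrow> bool" where
  "ext_lsc \<phi> \<longleftrightarrow> (\<forall>x. \<phi> x \<le> Liminf (at x) \<phi>)"

definition ext_proper :: "('a \<Rightarrow> ereal) \<Rightarrow> bool" where
  "ext_proper \<phi> \<longleftrightarrow> (\<forall>x. \<phi> x \<noteq> -\<infinity>) \<and> (\<exists>x. \<phi> x \<noteq> \<infinity>)"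

definition prox :: "real \<Rightarrow> ('a::real_normed_vector \<Rightarrow> ereal) \<Rightarrow> 'a \<Rightarrow> 'a" where
  "prox lam \<phi> x = (THE y. \<forall>w. \<phi> y + ereal (norm (x - y)^2 / (2 * lam))
                              \<le> \<phi> w + ereal (norm (x - w)^2 / (2 * lam)))"

definition grad_env :: "real \<Rightarrow> ('a::real_normed_vector \<Rightarrow> ereal) \<Rightarrow> 'a \<Rightarrow> 'a" where
  "grad_env lam \<phi> x = (1 / lam) *\<^sub>R (x - prox lam \<phi> x)"

definition F_nor :: "real \<Rightarrow> ('a::real_normed_vector \<Rightarrow> ereal) \<Rightarrow> ('a \<Rightarrow> 'a) \<Rightarrow> 'a \<Rightarrow> 'a" where
  "F_nor lam \<phi> gf z = gf (prox lam \<phi> z) + (1 / lam) *\<^sub>R (z - prox lam \<phi> z)"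

definition F_nat :: "real \<Rightarrow> ('a::real_normed_vector \<Rightarrow> ereal) \<Rightarrow> ('a \<Rightarrow> 'a) \<Rightarrow> 'a \<Rightarrow> 'a" where
  "F_nat lam \<phi> gf x = x - prox lam \<phi> (x - lam *\<^sub>R gf x)"

text \<open>Merit function \<open>H_\<xi>(z) = \<psi>(prox z) + \<xi>\<lambda>/2 \<parallel>F_nor(z)\<parallel>^2\<close> with \<open>\<psi> = f + \<phi>\<close>
  (\<open>\<phi>(prox z)\<close> is finite, so \<open>real_of_ereal\<close> is harmless).\<close>
definition H_merit :: "real \<Rightarrow> real \<Rightarrow> ('a::real_normed_vector \<Rightarrow> real) \<Rightarrow> ('a \<Rightarrow> 'a)
    \<Rightarrow> ('a \<Rightarrow> ereal) \<Rightarrow> 'a \<Rightarrow> real" where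
  "H_merit xi lam f gf \<phi> z =
     f (prox lam \<phi> z) + real_of_ereal (\<phi> (prox lam \<phi> z))
     + xi * lam / 2 * (norm (F_nor lam \<phi> gf z))^2"

definition xi_const :: "real \<Rightarrow> real \<Rightarrow> real" where
  "xi_const L lam = 1 / (2 + 2 * L^2 * lam^2)"

definition lambar_const :: "real \<Rightarrow> real \<Rightarrow> real" where
  "lambar_const L lam = (L + 2 / lam) * exp (L * lam + 2)"

definition T_const :: "real \<Rightarrow> real \<Rightarrow> real" where
  "T_const L lam = (let xi = xi_const L lam; lb = lambar_const L lam in
     Sup {t. 0 < t \<and> t \<le> min (4 * lam / 5) 1
             \<and> 1 / (2 * t) \<ge> xi * (4 * L - 1 / lam) + L
             \<and> L * lb^2 * t^2 + 5 * lb^2 * t \<le> 8 * xi / (25 * lam)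
             \<and> (5 / t + L) * (1 + lb * t)^2 \<le> 10 / t})"

end

theory Submission
  imports Defs
begin

(* Write e_k = g_k - grad f(x_k) and G = L + 1/lam, so that z_{k+1} = z_k - alpha_k (F_nor(z_k) + e_k).
   The noise is absorbed into the damped sum S_{k+1} = (1 - G alpha_k) S_k + alpha_k e_k: the shifted
   point y_k = z_k + S_k follows the same iteration with the error F_nor(z_k) - F_nor(y_k) + G S_k,
   which is at most 2 G |S_k| because F_nor is G-Lipschitz. For small steps the merit function H_xi
   decreases along such an iteration by xi/4 alpha |F_nor|^2 up to twice the weighted squared error;
   telescoping, bounding H_xi below by psibar and using |F_nat(prox z)| <= lam |F_nor(z)| bounds
   sum alpha_i |F_nat(x_i)|^2 pathwise by H_xi(z^0) - psibar and sum alpha_i |S_i|^2.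
   Since S_k is F_k-measurable and e_k is conditionally centred, the cross term vanishes in
   expectation and E|S_{k+1}|^2 <= (1 - G alpha_k) E|S_k|^2 + alpha_k^2 sigma_k^2, which sums to
   G sum alpha_i E|S_i|^2 <= sum alpha_i^2 sigma_i^2. Finally the minimum is at most the
   alpha-weighted average. *)

section \<open>Lower semicontinuity and existence of proximal points\<close>

definition lower_semicontinuous :: "('a::topological_space \<Rightarrow> ereal) \<Rightarrow> bool" where
  "lower_semicontinuous h \<longleftrightarrow> (\<forall>c. open {u. ereal c < h u})"

lemma ext_lsc_imp_lower_semicontinuous:
  assumes "ext_lsc h"
  shows "lower_semicontinuous h"
  unfolding lower_semicontinuous_def
proof (intro allI, subst open_subopen, intro ballI)
  fix c v assume "v \<in> {u. ereal c < h u}"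
  then have c: "ereal c < h v" by simp
  with assms have "\<forall>\<^sub>F u in at v. ereal c < h u"
    unfolding ext_lsc_def using le_Liminf_iff by blast
  with c have "\<forall>\<^sub>F u in nhds v. ereal c < h u"
    by (simp add: eventually_nhds_conv_at)
  then show "\<exists>T. open T \<and> v \<in> T \<and> T \<subseteq> {u. ereal c < h u}"
    unfolding eventually_nhds by blast
qed

lemma lower_semicontinuous_add_continuous:
  assumes h: "lower_semicontinuous h" and q: "continuous_on UNIV q"
  shows "lower_semicontinuous (\<lambda>u. h u + ereal (q u))"
  unfolding lower_semicontinuous_def
proof (intro allI, subst open_subopen, intro ballI)
  fix c v assume "v \<in> {u. ereal c < h u + ereal (q u)}"
  then have "ereal (c - q v) < h v" by (cases "h v") auto
  then obtain r where "ereal (c - q v) < ereal r" "ereal r < h v"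
    using ereal_dense2 by blast
  then have r: "c - q v < r" "ereal r < h v" by simp_all
  let ?T = "{u. ereal r < h u} \<inter> {u. c - r < q u}"
  have "open {u. ereal r < h u}" using h unfolding lower_semicontinuous_def by blast
  moreover have "open {u. c - r < q u}" using q by (intro open_Collect_less) auto
  ultimately have "open ?T" by (rule open_Int)
  moreover have "?T \<subseteq> {u. ereal c < h u + ereal (q u)}"
  proof
    fix u assume "u \<in> ?T"
    then show "u \<in> {u. ereal c < h u + ereal (q u)}" by (cases "h u") auto
  qed
  moreover have "v \<in> ?T" using r by auto
  ultimately show "\<exists>T. open T \<and> v \<in> T \<and> T \<subseteq> {u. ereal c < h u + ereal (q u)}" by blast
qed

lemma lower_semicontinuous_attains_min:
  assumes lsc: "lower_semicontinuous h" and K: "compact K" "K \<noteq> {}"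
  obtains x where "x \<in> K" "\<And>y. y \<in> K \<Longrightarrow> h x \<le> h y"
proof -
  have "\<exists>x\<in>K. \<forall>y\<in>K. h x \<le> h y"
  proof (rule ccontr)
    assume no_min: "\<not> ?thesis"
    define m where "m = (INF y\<in>K. h y)"
    have cover: "K \<subseteq> (\<Union>c\<in>{c. m < ereal c}. {u. ereal c < h u})"
    proof
      fix x assume x: "x \<in> K"
      then obtain y where "y \<in> K" "h y < h x" using no_min by (auto simp: not_le)
      then have "m < h x" unfolding m_def by (meson INF_lower le_less_trans)
      then show "x \<in> (\<Union>c\<in>{c. m < ereal c}. {u. ereal c < h u})"
        using ereal_dense2 by blast
    qed
    obtain C
      where C: "C \<subseteq> {c. m < ereal c}" "finite C" "K \<subseteq> (\<Union>c\<in>C. {u. ereal c < h u})"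
    proof (rule compactE_image[OF K(1) _ cover])
      fix c show "open {u. ereal c < h u}" using lsc unfolding lower_semicontinuous_def by blast
    qed
    then have "C \<noteq> {}" using K(2) by blast
    then have "m < ereal (Min C)" using C(1,2) Min_in by blast
    moreover have "ereal (Min C) \<le> m"
      unfolding m_def
    proof (rule INF_greatest)
      fix y assume "y \<in> K"
      then obtain c where "c \<in> C" "ereal c < h y" using C(3) by blast
      have "ereal (Min C) \<le> ereal c" using C(2) \<open>c \<in> C\<close> by simp
      also have "\<dots> \<le> h y" using \<open>ereal c < h y\<close> by (rule less_imp_le)
      finally show "ereal (Min C) \<le> h y" .
    qed
    ultimately show False by simp
  qed
  then show ?thesis using that by blast
qed

lemma lower_semicontinuous_attains_global_min:
  fixes h :: "'a::heine_borel \<Rightarrow> ereal"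
  assumes lsc: "lower_semicontinuous h" and far: "\<And>u. R < dist u y \<Longrightarrow> h w < h u"
  obtains x where "\<And>u. h x \<le> h u"
proof -
  have w: "w \<in> cball y R" using far[of w] by (force simp: dist_commute)
  then obtain x where x: "\<And>u. u \<in> cball y R \<Longrightarrow> h x \<le> h u"
    using lower_semicontinuous_attains_min[OF lsc compact_cball] by blast
  have "h x \<le> h u" for u
  proof (cases "u \<in> cball y R")
    case False
    then have "h w < h u" using far by (simp add: dist_commute)
    then show ?thesis using x[OF w] by simp
  qed (rule x)
  then show ?thesis using that by blast
qed

lemma ext_convex_linear_minorant:
  fixes \<phi> :: "'a::real_normed_vector \<Rightarrow> ereal"
  assumes cv: "ext_convex \<phi>" and nm: "\<And>u. \<phi> u \<noteq> -\<infinity>" and w: "\<phi> w = ereal a"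
    and m: "\<And>u. u \<in> cball w 1 \<Longrightarrow> ereal m \<le> \<phi> u"
  shows "ereal (m - (a - m) * norm (u - w)) \<le> \<phi> u"
proof -
  have am: "m \<le> a" using m[of w] w by simp
  show ?thesis
  proof (cases "norm (u - w) \<le> 1")
    case True
    then have "ereal m \<le> \<phi> u" using m by (simp add: dist_norm norm_minus_commute)
    moreover have "m - (a - m) * norm (u - w) \<le> m" using am by simp
    ultimately show ?thesis by (meson ereal_less_eq(3) order_trans)
  next
    case False
    define r where "r = norm (u - w)"
    have r1: "r > 1" using False r_def by simp
    define t where "t = 1 / r"
    have t01: "0 \<le> t" "t \<le> 1" using r1 t_def by auto
    define v where "v = (1 - t) *\<^sub>R w + t *\<^sub>R u"
    have "w - v = t *\<^sub>R (w - u)" unfolding v_def by (simp add: algebra_simps)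
    then have "norm (w - v) = t * r" using t01 r_def by (simp add: norm_minus_commute)
    then have "norm (w - v) = 1" using r1 t_def by simp
    then have "ereal m \<le> \<phi> v" using m by (simp add: dist_norm)
    also have "\<phi> v \<le> ereal (1 - t) * \<phi> w + ereal t * \<phi> u"
      using cv t01 unfolding ext_convex_def v_def by blast
    finally have convex_step: "ereal m \<le> ereal (1 - t) * ereal a + ereal t * \<phi> u" using w by simp
    show ?thesis
    proof (cases "\<phi> u")
      case (real b)
      with convex_step have "r * m \<le> r * ((1 - t) * a + t * b)" using r1 by simp
      also have "\<dots> = (r - 1) * a + b" using t_def r1 by (simp add: field_simps)
      finally show ?thesis using real r_def am by (simp add: algebra_simps)
    qed (use nm in auto)
  qed
qed

lemma quadratic_dominates_linear:
  fixes lam K B r :: real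
  assumes "lam > 0" "K \<ge> 0" "2 * lam * (K + \<bar>B\<bar> + 1) + 1 < r"
  shows "B < r^2 / (2 * lam) - K * r"
proof -
  have "0 \<le> 2 * lam * (K + \<bar>B\<bar> + 1)" using assms by simp
  then have r1: "r > 1" using assms by linarith
  have g: "r / (2 * lam) - K > \<bar>B\<bar> + 1" using assms by (simp add: field_simps)
  have "r * (r / (2 * lam) - K) \<ge> 1 * (r / (2 * lam) - K)"
    using r1 g by (intro mult_right_mono) auto
  then show ?thesis using g by (simp add: power2_eq_square algebra_simps)
qed

(* A linear minorant of phi around a point of its domain makes the objective grow quadratically,
   so it is minimised on a large enough ball. *)
lemma prox_objective_has_minimizer:
  fixes \<phi> :: "'a::euclidean_space \<Rightarrow> ereal"
  assumes cv: "ext_convex \<phi>" and ls: "ext_lsc \<phi>" and pr: "ext_proper \<phi>" and lam: "lam > 0"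
  shows "\<exists>x. \<forall>w. \<phi> x + ereal (norm (y - x)^2 / (2 * lam)) \<le> \<phi> w + ereal (norm (y - w)^2 / (2 * lam))"
proof -
  have lsc: "lower_semicontinuous \<phi>" using ls by (rule ext_lsc_imp_lower_semicontinuous)
  have nm: "\<And>u. \<phi> u \<noteq> -\<infinity>" using pr unfolding ext_proper_def by blast
  obtain w where "\<phi> w \<noteq> \<infinity>" using pr unfolding ext_proper_def by blast
  then obtain a where w: "\<phi> w = ereal a" using nm[of w] by (cases "\<phi> w") auto
  obtain x1 where x1: "\<And>u. u \<in> cball w 1 \<Longrightarrow> \<phi> x1 \<le> \<phi> u"
    using lower_semicontinuous_attains_min[OF lsc compact_cball, of w 1] by auto
  obtain m where m: "\<phi> x1 = ereal m"
    using x1[of w] w nm[of x1] by (cases "\<phi> x1") auto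
  define K where "K = a - m"
  have K: "K \<ge> 0" using x1[of w] m w K_def by simp
  have minorant: "ereal (m - K * norm (u - w)) \<le> \<phi> u" for u
    unfolding K_def using ext_convex_linear_minorant[OF cv nm w, of m] x1 m by simp
  define q where "q u = norm (y - u)^2 / (2 * lam)" for u
  define B where "B = a + q w - m + K * norm (y - w)"
  have far: "\<phi> w + ereal (q w) < \<phi> u + ereal (q u)"
    if "2 * lam * (K + \<bar>B\<bar> + 1) + 1 < dist u y" for u
  proof -
    have "norm (u - w) \<le> dist u y + norm (y - w)"
      using norm_triangle_ineq[of "u - y" "y - w"] by (simp add: dist_norm)
    then have "m - K * (dist u y + norm (y - w)) \<le> m - K * norm (u - w)"
      using K by (simp add: mult_left_mono)
    then have le: "ereal (m - K * (dist u y + norm (y - w)) + q u) \<le> \<phi> u + ereal (q u)"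
      using minorant[of u] by (cases "\<phi> u") auto
    have "a + q w < m - K * (dist u y + norm (y - w)) + q u"
      using quadratic_dominates_linear[OF lam K that]
      unfolding q_def B_def by (simp add: dist_norm norm_minus_commute algebra_simps)
    then have "\<phi> w + ereal (q w) < ereal (m - K * (dist u y + norm (y - w)) + q u)" using w by simp
    then show ?thesis using le by (rule less_le_trans)
  qed
  have "lower_semicontinuous (\<lambda>u. \<phi> u + ereal (q u))"
    using lsc lam unfolding q_def
    by (intro lower_semicontinuous_add_continuous continuous_intros) auto
  then obtain x where "\<And>u. \<phi> x + ereal (q x) \<le> \<phi> u + ereal (q u)"
    using lower_semicontinuous_attains_global_min[where h = "\<lambda>u. \<phi> u + ereal (q u)", OF _ far] by blast
  then show ?thesis unfolding q_def by blast
qed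

section \<open>The proximal operator\<close>

lemma field_le_epsilon_mult:
  fixes a b N :: real
  assumes N: "N \<ge> 0" and le: "\<And>t. 0 < t \<Longrightarrow> t \<le> 1 \<Longrightarrow> a \<le> b + t * N"
  shows "a \<le> b"
proof (rule field_le_epsilon)
  fix e :: real assume e: "0 < e"
  define t where "t = min 1 (e / (N + 1))"
  have t: "0 < t" "t \<le> 1" using e N by (auto simp: t_def)
  have "t * N \<le> e / (N + 1) * N" using N by (intro mult_right_mono) (auto simp: t_def)
  also have "\<dots> \<le> e" using e N by (simp add: field_simps)
  finally show "a \<le> b + e" using le[OF t] by linarith
qed

locale proximal =
  fixes \<phi> :: "'a::euclidean_space \<Rightarrow> ereal" and lam :: real
  assumes convex: "ext_convex \<phi>" and lsc: "ext_lsc \<phi>" and proper: "ext_proper \<phi>"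
    and lam_pos: "lam > 0"
begin

abbreviation "p \<equiv> prox lam \<phi>"

definition prox_objective :: "'a \<Rightarrow> 'a \<Rightarrow> ereal" where
  "prox_objective y w = \<phi> w + ereal (norm (y - w)^2 / (2 * lam))"

abbreviation minimizes :: "'a \<Rightarrow> 'a \<Rightarrow> bool" where
  "minimizes y x \<equiv> \<forall>w. prox_objective y x \<le> prox_objective y w"

lemma not_MInfty: "\<phi> u \<noteq> -\<infinity>"
  using proper unfolding ext_proper_def by blast

lemma minimizer_finite:
  assumes "minimizes y x"
  shows "\<phi> x \<noteq> \<infinity>"
proof
  assume inf: "\<phi> x = \<infinity>"
  obtain w where w: "\<phi> w \<noteq> \<infinity>" using proper unfolding ext_proper_def by blast
  have "prox_objective y x \<le> prox_objective y w" using assms by blast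
  then show False using inf w unfolding prox_objective_def by (cases "\<phi> w") auto
qed

lemma minimizer_variational_inequality:
  assumes x: "minimizes y x" and w: "\<phi> w \<noteq> \<infinity>"
  shows "real_of_ereal (\<phi> x) + (y - x) \<bullet> (w - x) / lam \<le> real_of_ereal (\<phi> w)"
proof -
  obtain a where a: "\<phi> x = ereal a" using minimizer_finite[OF x] not_MInfty[of x] by (cases "\<phi> x") auto
  obtain b where b: "\<phi> w = ereal b" using w not_MInfty[of w] by (cases "\<phi> w") auto
  define c where "c = (y - x) \<bullet> (w - x)"
  define N where "N = norm (w - x)^2"
  have small: "a \<le> b - c / lam + t * (N / (2 * lam))" if t: "0 < t" "t \<le> 1" for t
  proof -
    define xt where "xt = (1 - t) *\<^sub>R x + t *\<^sub>R w"
    have "\<phi> xt \<le> ereal (1 - t) * \<phi> x + ereal t * \<phi> w"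
      using convex t unfolding ext_convex_def xt_def by auto
    then have "\<phi> xt \<le> ereal ((1 - t) * a + t * b)" using a b by simp
    moreover have "prox_objective y x \<le> prox_objective y xt" using x by blast
    ultimately have "a + norm (y - x)^2 / (2 * lam) \<le> (1 - t) * a + t * b + norm (y - xt)^2 / (2 * lam)"
      unfolding prox_objective_def using a by (cases "\<phi> xt") auto
    moreover have "norm (y - xt)^2 = norm (y - x)^2 - 2 * t * c + t^2 * N"
    proof -
      have xt: "y - xt = (y - x) - t *\<^sub>R (w - x)" unfolding xt_def by (simp add: algebra_simps)
      show ?thesis unfolding xt c_def N_def
        by (simp only: power2_norm_eq_inner)
          (simp add: inner_diff_left inner_diff_right inner_commute algebra_simps power2_eq_square)
    qed
    ultimately have "a + norm (y - x)^2 / (2 * lam)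
        \<le> (1 - t) * a + t * b + (norm (y - x)^2 - 2 * t * c + t^2 * N) / (2 * lam)"
      by simp
    moreover have "(norm (y - x)^2 - 2 * t * c + t^2 * N) / (2 * lam)
        = norm (y - x)^2 / (2 * lam) - t * c / lam + t * (t * (N / (2 * lam)))"
      using lam_pos by (simp add: field_simps power2_eq_square)
    ultimately have "t * a \<le> t * b - t * c / lam + t * (t * (N / (2 * lam)))"
      by (simp add: algebra_simps)
    then have "t * a \<le> t * (b - c / lam + t * (N / (2 * lam)))"
      by (simp add: algebra_simps)
    then show ?thesis using t by simp
  qed
  have "N / (2 * lam) \<ge> 0" using lam_pos by (simp add: N_def)
  then have "a \<le> b - c / lam" using small by (rule field_le_epsilon_mult)
  then show ?thesis using a b unfolding c_def by simp
qed

lemma minimizers_firmly_nonexpansive: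
  assumes x1: "minimizes y1 x1" and x2: "minimizes y2 x2"
  shows "norm (x1 - x2)^2 \<le> (y1 - y2) \<bullet> (x1 - x2)"
proof -
  have "real_of_ereal (\<phi> x1) + (y1 - x1) \<bullet> (x2 - x1) / lam \<le> real_of_ereal (\<phi> x2)"
    by (rule minimizer_variational_inequality[OF x1 minimizer_finite[OF x2]])
  moreover have "real_of_ereal (\<phi> x2) + (y2 - x2) \<bullet> (x1 - x2) / lam \<le> real_of_ereal (\<phi> x1)"
    by (rule minimizer_variational_inequality[OF x2 minimizer_finite[OF x1]])
  ultimately have "((y1 - x1) \<bullet> (x2 - x1) + (y2 - x2) \<bullet> (x1 - x2)) / lam \<le> 0"
    by (simp add: add_divide_distrib)
  then have "(y1 - x1) \<bullet> (x2 - x1) + (y2 - x2) \<bullet> (x1 - x2) \<le> 0"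
    using lam_pos by (simp add: divide_le_0_iff)
  then show ?thesis
    by (simp add: power2_norm_eq_inner inner_diff_left inner_diff_right inner_commute algebra_simps)
qed

lemma prox_minimizes: "minimizes y (p y)"
proof -
  obtain x where "minimizes y x"
    using prox_objective_has_minimizer[OF convex lsc proper lam_pos, of y]
    unfolding prox_objective_def by blast
  moreover have "x1 = x2" if "minimizes y x1" "minimizes y x2" for x1 x2
    using minimizers_firmly_nonexpansive[OF that] by simp
  ultimately have "\<exists>!x. minimizes y x" by blast
  then show ?thesis unfolding prox_def prox_objective_def by (rule theI')
qed

lemma prox_finite: "\<phi> (p y) \<noteq> \<infinity>"
  by (rule minimizer_finite[OF prox_minimizes])

lemma prox_variational_inequality:
  "\<phi> w \<noteq> \<infinity> \<Longrightarrow> real_of_ereal (\<phi> (p y)) + (y - p y) \<bullet> (w - p y) / lam \<le> real_of_ereal (\<phi> w)"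
  by (rule minimizer_variational_inequality[OF prox_minimizes])

lemma prox_firmly_nonexpansive: "norm (p a - p b)^2 \<le> (a - b) \<bullet> (p a - p b)"
  by (rule minimizers_firmly_nonexpansive[OF prox_minimizes prox_minimizes])

lemma prox_nonexpansive: "norm (p a - p b) \<le> norm (a - b)"
proof (cases "p a = p b")
  case False
  have "norm (p a - p b)^2 \<le> norm (a - b) * norm (p a - p b)"
    using prox_firmly_nonexpansive[of a b] Cauchy_Schwarz_ineq2[of "a - b" "p a - p b"] by simp
  then show ?thesis using False by (simp add: power2_eq_square)
qed simp

lemma prox_residual_nonexpansive: "norm ((a - p a) - (b - p b)) \<le> norm (a - b)"
proof (rule power2_le_imp_le)
  have "norm ((a - p a) - (b - p b))^2
      = norm (a - b)^2 - 2 * ((a - b) \<bullet> (p a - p b)) + norm (p a - p b)^2"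
    by (simp add: power2_norm_eq_inner inner_diff_left inner_diff_right inner_commute)
  then show "norm ((a - p a) - (b - p b))^2 \<le> norm (a - b)^2"
    using prox_firmly_nonexpansive[of a b] zero_le_power2[of "norm (p a - p b)"] by linarith
qed simp

lemma continuous_on_prox: "continuous_on UNIV p"
  by (rule lipschitz_on_continuous_on[where L = 1])
    (auto intro!: lipschitz_onI simp: dist_norm prox_nonexpansive)

lemma borel_measurable_prox[measurable]: "p \<in> borel_measurable borel"
  by (rule borel_measurable_continuous_onI[OF continuous_on_prox])

end

section \<open>The step-size constants\<close>

lemma lambar_const_ge:
  assumes "L > 0" "lam > 0"
  shows "L + 2 / lam \<le> lambar_const L lam"
proof -
  have "(L + 2 / lam) * 1 \<le> (L + 2 / lam) * exp (L * lam + 2)"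
    using assms by (intro mult_left_mono) (auto simp: add_pos_pos)
  then show ?thesis unfolding lambar_const_def by simp
qed

lemma lambar_const_pos: "L > 0 \<Longrightarrow> lam > 0 \<Longrightarrow> 0 < lambar_const L lam"
  unfolding lambar_const_def by (simp add: add_pos_pos)

lemma xi_const_bounds:
  assumes "L > 0" "lam > 0"
  shows "0 < xi_const L lam" "xi_const L lam \<le> 1 / 2" "xi_const L lam * (1 + lam^2 * L^2) = 1 / 2"
proof -
  have "0 < 2 + 2 * L^2 * lam^2" by (simp add: add_pos_nonneg)
  then show "0 < xi_const L lam" "xi_const L lam \<le> 1 / 2" "xi_const L lam * (1 + lam^2 * L^2) = 1 / 2"
    unfolding xi_const_def by (simp_all add: field_simps)
qed

definition T_candidates :: "real \<Rightarrow> real \<Rightarrow> real set" where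
  "T_candidates L lam = {t. 0 < t \<and> t \<le> min (4 * lam / 5) 1
     \<and> 1 / (2 * t) \<ge> xi_const L lam * (4 * L - 1 / lam) + L
     \<and> L * (lambar_const L lam)^2 * t^2 + 5 * (lambar_const L lam)^2 * t \<le> 8 * xi_const L lam / (25 * lam)
     \<and> (5 / t + L) * (1 + lambar_const L lam * t)^2 \<le> 10 / t}"

lemma T_const_eq_Sup: "T_const L lam = Sup (T_candidates L lam)"
  unfolding T_const_def T_candidates_def Let_def ..

lemma small_step_product_le:
  fixes t L b :: real
  assumes "t > 0" "L * t \<le> 1/6" "b \<ge> 0" "b * t \<le> 1/5"
  shows "(5 / t + L) * (1 + b * t)^2 \<le> 10 / t"
proof -
  have "(5 + L * t) * (1 + b * t)^2 \<le> (5 + 1/6) * (1 + 1/5)^2"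
    using assms by (intro mult_mono power_mono) auto
  also have "\<dots> \<le> 10" by (simp add: power2_eq_square)
  finally have "(5 + L * t) * (1 + b * t)^2 / t \<le> 10 / t"
    using assms(1) by (simp add: divide_right_mono)
  moreover have "5 / t + L = (5 + L * t) / t" using assms(1) by (simp add: field_simps)
  ultimately show ?thesis by simp
qed

lemma T_candidates_nonempty:
  assumes L: "L > 0" and lam: "lam > 0"
  shows "T_candidates L lam \<noteq> {}"
proof -
  define b where "b = lambar_const L lam"
  define \<xi> where "\<xi> = xi_const L lam"
  have b: "b > 0" unfolding b_def by (rule lambar_const_pos[OF L lam])
  have xi: "0 < \<xi>" "\<xi> \<le> 1 / 2" unfolding \<xi>_def using xi_const_bounds[OF L lam] by auto
  define C where "C = (L + 5) * b^2"
  have C: "C > 0" unfolding C_def using L b by simp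
  define t where "t = Min {4 * lam / 5, 1, 1 / (6 * L), 8 * \<xi> / (25 * lam * C), 1 / (5 * b)}"
  have t_le: "t \<le> 4 * lam / 5" "t \<le> 1" "t \<le> 1 / (6 * L)"
      "t \<le> 8 * \<xi> / (25 * lam * C)" "t \<le> 1 / (5 * b)"
    unfolding t_def by simp_all
  have t_pos: "t > 0" unfolding t_def using L lam b xi C by simp
  have "1 / (2 * t) \<ge> \<xi> * (4 * L - 1 / lam) + L"
  proof -
    have "3 * L \<le> 1 / (2 * t)" using t_le(3) t_pos L by (simp add: field_simps)
    moreover have "\<xi> * (4 * L - 1 / lam) \<le> \<xi> * (4 * L)"
      using xi lam by (intro mult_left_mono) auto
    moreover have "\<xi> * (4 * L) \<le> 1 / 2 * (4 * L)"
      using xi L by (intro mult_right_mono) auto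
    ultimately show ?thesis by linarith
  qed
  moreover have "L * b^2 * t^2 + 5 * b^2 * t \<le> 8 * \<xi> / (25 * lam)"
  proof -
    have "t^2 \<le> t" using t_pos t_le(2) by (simp add: power2_eq_square mult_left_le_one_le)
    then have "L * b^2 * t^2 \<le> L * b^2 * t" using L by (intro mult_left_mono) auto
    then have "L * b^2 * t^2 + 5 * b^2 * t \<le> C * t" unfolding C_def by (simp add: algebra_simps)
    also have "\<dots> \<le> C * (8 * \<xi> / (25 * lam * C))"
      using t_le(4) C by (intro mult_left_mono) auto
    also have "\<dots> = 8 * \<xi> / (25 * lam)" using C lam by (simp add: field_simps)
    finally show ?thesis .
  qed
  moreover have "(5 / t + L) * (1 + b * t)^2 \<le> 10 / t"
    using t_pos t_le(3,5) L b by (intro small_step_product_le) (auto simp: field_simps)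
  ultimately have "t \<in> T_candidates L lam"
    unfolding T_candidates_def b_def \<xi>_def using t_pos t_le(1,2) by auto
  then show ?thesis by blast
qed

lemma T_const_pos:
  assumes "L > 0" "lam > 0"
  shows "0 < T_const L lam"
proof -
  obtain t where t: "t \<in> T_candidates L lam" using T_candidates_nonempty[OF assms] by blast
  have "bdd_above (T_candidates L lam)"
    unfolding T_candidates_def by (rule bdd_aboveI[of _ 1]) auto
  with t have "t \<le> T_const L lam" unfolding T_const_eq_Sup by (intro cSup_upper)
  moreover have "0 < t" using t unfolding T_candidates_def by simp
  ultimately show ?thesis by linarith
qed

lemma T_const_le:
  assumes "L > 0" "lam > 0"
  shows "T_const L lam \<le> 4 * lam / 5"
    and "T_const L lam \<le> 8 * xi_const L lam / (125 * lam * (lambar_const L lam)^2)"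
proof -
  have ne: "T_candidates L lam \<noteq> {}" by (rule T_candidates_nonempty[OF assms])
  show "T_const L lam \<le> 4 * lam / 5"
    unfolding T_const_eq_Sup by (rule cSup_least[OF ne]) (auto simp: T_candidates_def)
  have b: "lambar_const L lam > 0" by (rule lambar_const_pos[OF assms])
  show "T_const L lam \<le> 8 * xi_const L lam / (125 * lam * (lambar_const L lam)^2)"
    unfolding T_const_eq_Sup
  proof (rule cSup_least[OF ne])
    fix t assume "t \<in> T_candidates L lam"
    moreover have "0 \<le> L * (lambar_const L lam)^2 * t^2" using assms by simp
    ultimately have "5 * (lambar_const L lam)^2 * t \<le> 8 * xi_const L lam / (25 * lam)"
      unfolding T_candidates_def by simp
    then show "t \<le> 8 * xi_const L lam / (125 * lam * (lambar_const L lam)^2)"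
      using b assms by (simp add: field_simps)
  qed
qed

lemma step_size_bounds:
  assumes L: "L > 0" and lam: "lam > 0" and a: "0 < a" "a \<le> T_const L lam / 5"
  shows "a \<le> 1 / (8 * (L + 1 / lam))" "a \<le> lam / 12" "(L + 1 / lam) * a \<le> 1"
proof -
  define b where "b = lambar_const L lam"
  have b: "L + 2 / lam \<le> b" unfolding b_def by (rule lambar_const_ge[OF L lam])
  have b_pos: "b > 0" unfolding b_def by (rule lambar_const_pos[OF L lam])
  have "8 * xi_const L lam / (125 * lam * b^2) \<le> 4 / (125 * lam * b^2)"
    using xi_const_bounds[OF L lam] lam b_pos by (intro divide_right_mono) auto
  then have "a \<le> 4 / (125 * lam * b^2)"
    using a T_const_le(2)[OF L lam] T_const_pos[OF L lam] unfolding b_def by linarith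
  then have alb: "a * lam * b^2 \<le> 4 / 125" using lam b_pos by (simp add: field_simps)
  have lb: "lam * b \<ge> 2"
  proof -
    have "lam * (L + 2 / lam) \<le> lam * b" using b lam by (intro mult_left_mono) auto
    moreover have "lam * (L + 2 / lam) = lam * L + 2" using lam by (simp add: field_simps)
    moreover have "0 < lam * L" using lam L by simp
    ultimately show ?thesis by linarith
  qed
  have ab: "a * b \<le> 2 / 125"
  proof -
    have "(a * b) * 2 \<le> (a * b) * (lam * b)" using lb a b_pos by (intro mult_left_mono) auto
    then show ?thesis using alb by (simp add: power2_eq_square algebra_simps)
  qed
  have "1 / lam \<le> 2 / lam" using lam by (simp add: divide_right_mono)
  then have "L + 1 / lam \<le> b" using b by linarith
  then have "(L + 1 / lam) * a \<le> b * a" using a by (intro mult_right_mono) auto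
  moreover have "b * a = a * b" by (rule mult.commute)
  ultimately have G: "(L + 1 / lam) * a \<le> 2 / 125" using ab by linarith
  then show "(L + 1 / lam) * a \<le> 1" by linarith
  show "a \<le> 1 / (8 * (L + 1 / lam))"
    using G L lam by (simp add: field_simps add_pos_pos)
  have "a = (a * b) * (1 / b)" using b_pos by simp
  also have "\<dots> \<le> (2 / 125) * (lam / 2)"
    using ab lb b_pos lam a by (intro mult_mono) (auto simp: field_simps)
  finally show "a \<le> lam / 12" using lam by simp
qed

lemma residual_constants_le:
  assumes L: "L > 0" and lam: "lam > 0"
  shows "8 * lam^2 / xi_const L lam \<le> 10 * (1 + lam * lambar_const L lam)^2 * lam^2 / xi_const L lam"
    and "65 * lam^2 * (L + 1 / lam) / xi_const L lam
         \<le> 200 * (1 + lam * lambar_const L lam)^2 * lam^2 / (T_const L lam * xi_const L lam)"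
proof -
  define b where "b = lambar_const L lam"
  define T where "T = T_const L lam"
  have xi: "0 < xi_const L lam" using xi_const_bounds[OF L lam] by simp
  have T: "0 < T" "T \<le> 4 * lam / 5" unfolding T_def using T_const_pos T_const_le(1) L lam by auto
  have "lam * (L + 2 / lam) \<le> lam * b" unfolding b_def using lambar_const_ge[OF L lam] lam by simp
  moreover have "lam * (L + 2 / lam) = lam * L + 2" using lam by (simp add: field_simps)
  ultimately have lb: "lam * L + 2 \<le> lam * b" by simp
  have "0 < lam * L" using L lam by simp
  then have ge1: "1 \<le> 1 + lam * b" using lb by linarith
  have "1 + lam * b \<le> (1 + lam * b)^2"
    using mult_right_mono[OF ge1, of "1 + lam * b"] ge1 by (simp add: power2_eq_square)
  then have one_le: "1 \<le> (1 + lam * b)^2" "1 + lam * b \<le> (1 + lam * b)^2"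
    using ge1 by linarith+
  have "8 \<le> 10 * (1 + lam * b)^2" using one_le(1) by linarith
  then show "8 * lam^2 / xi_const L lam \<le> 10 * (1 + lam * lambar_const L lam)^2 * lam^2 / xi_const L lam"
    unfolding b_def using xi by (intro divide_right_mono mult_right_mono) auto
  have "(L + 1 / lam) * T \<le> (L + 1 / lam) * (4 * lam / 5)"
    using T L lam by (intro mult_left_mono) (auto simp: add_pos_pos)
  also have "\<dots> = 4/5 * (lam * L) + 4/5" using lam by (simp add: field_simps)
  finally have "65 * ((L + 1 / lam) * T) \<le> 200 * (1 + lam * b)^2"
    using lb one_le \<open>0 < lam * L\<close> by linarith
  then have "65 * (L + 1 / lam) \<le> 200 * (1 + lam * b)^2 / T" using T by (simp add: field_simps)
  then have "65 * (L + 1 / lam) * (lam^2 / xi_const L lam) \<le> 200 * (1 + lam * b)^2 / T * (lam^2 / xi_const L lam)"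
    using xi by (intro mult_right_mono) auto
  then show "65 * lam^2 * (L + 1 / lam) / xi_const L lam
         \<le> 200 * (1 + lam * lambar_const L lam)^2 * lam^2 / (T_const L lam * xi_const L lam)"
    unfolding b_def T_def by (simp add: field_simps)
qed

lemma residual_estimate_le:
  assumes L: "L > 0" and lam: "lam > 0" and H0: "0 \<le> H0" and S2: "0 \<le> S2" and Sa: "0 \<le> Sa"
  shows "(8 * lam^2 / xi_const L lam * H0 + 65 * lam^2 * (L + 1 / lam) / xi_const L lam * S2) / Sa
    \<le> 10 * (1 + lam * lambar_const L lam)^2 * lam^2 / xi_const L lam * H0 / Sa
      + max (200 * (1 + lam * lambar_const L lam)^2 * lam^2 / (T_const L lam * xi_const L lam))
            (8 * lam^2 * (lambar_const L lam)^2 * T_const L lam) * S2 / Sa"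
proof -
  note D = residual_constants_le[OF L lam]
  have "8 * lam^2 / xi_const L lam * H0 \<le> 10 * (1 + lam * lambar_const L lam)^2 * lam^2 / xi_const L lam * H0"
    using D(1) H0 by (rule mult_right_mono)
  moreover have "65 * lam^2 * (L + 1 / lam) / xi_const L lam * S2
      \<le> max (200 * (1 + lam * lambar_const L lam)^2 * lam^2 / (T_const L lam * xi_const L lam))
            (8 * lam^2 * (lambar_const L lam)^2 * T_const L lam) * S2"
    using D(2) S2 by (intro mult_right_mono) auto
  ultimately have "8 * lam^2 / xi_const L lam * H0 + 65 * lam^2 * (L + 1 / lam) / xi_const L lam * S2
    \<le> 10 * (1 + lam * lambar_const L lam)^2 * lam^2 / xi_const L lam * H0
      + max (200 * (1 + lam * lambar_const L lam)^2 * lam^2 / (T_const L lam * xi_const L lam))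
            (8 * lam^2 * (lambar_const L lam)^2 * T_const L lam) * S2"
    by (rule add_mono)
  then show ?thesis using Sa unfolding add_divide_distrib[symmetric] by (rule divide_right_mono)
qed

section \<open>Descent of the merit function along the normal map\<close>

lemma lipschitz_gradient_upper_bound:
  fixes f :: "'a::real_inner \<Rightarrow> real"
  assumes f_grad: "\<And>y. (f has_derivative (\<lambda>h. gf y \<bullet> h)) (at y)"
    and lip: "\<And>y y'. norm (gf y - gf y') \<le> L * norm (y - y')" and L: "0 \<le> L"
  shows "f b \<le> f a + gf a \<bullet> (b - a) + L * norm (b - a)^2"
proof -
  define d where "d = b - a"
  define g where "g t = f (a + t *\<^sub>R d) - t * (gf a \<bullet> d)" for t :: real
  define g' where "g' t h = gf (a + t *\<^sub>R d) \<bullet> (h *\<^sub>R d) - h * (gf a \<bullet> d)" for t h :: real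
  have der: "(g has_derivative g' t) (at t)" for t
  proof -
    have "((\<lambda>t. a + t *\<^sub>R d) has_derivative (\<lambda>h. h *\<^sub>R d)) (at t)"
      by (auto intro!: derivative_eq_intros)
    from has_derivative_compose[OF this f_grad]
    show ?thesis unfolding g_def g'_def by (auto intro!: derivative_eq_intros)
  qed
  have "continuous_on {0..1} g"
    by (rule has_derivative_continuous_on[of _ _ g']) (meson der has_derivative_at_withinI)
  then obtain t where t: "t \<in> {0<..<1}" "norm (g 1 - g 0) \<le> norm (g' t 1)"
    using mvt_general[of 0 1 g g'] der by auto
  have "norm (g' t 1) = \<bar>(gf (a + t *\<^sub>R d) - gf a) \<bullet> d\<bar>"
    unfolding g'_def by (simp add: inner_diff_left)
  also have "\<dots> \<le> norm (gf (a + t *\<^sub>R d) - gf a) * norm d"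
    by (rule Cauchy_Schwarz_ineq2)
  also have "\<dots> \<le> (L * (t * norm d)) * norm d"
    using lip[of "a + t *\<^sub>R d" a] t(1) by (intro mult_right_mono) auto
  also have "\<dots> = L * (t * norm d^2)" by (simp add: power2_eq_square algebra_simps)
  also have "\<dots> \<le> L * norm d^2"
    using t(1) L by (intro mult_left_mono) (auto intro: mult_left_le_one_le)
  finally show ?thesis using t(2) unfolding g_def d_def by simp
qed

locale composite = proximal \<phi> lam for \<phi> :: "'a::euclidean_space \<Rightarrow> ereal" and lam +
  fixes f :: "'a \<Rightarrow> real" and gf :: "'a \<Rightarrow> 'a" and L psibar :: real
  assumes f_grad: "\<And>y. (f has_derivative (\<lambda>h. gf y \<bullet> h)) (at y)"
    and gf_lipschitz: "\<And>y y'. norm (gf y - gf y') \<le> L * norm (y - y')"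
    and L_pos: "L > 0"
    and psi_lower_bound: "\<And>y. \<phi> y \<noteq> \<infinity> \<Longrightarrow> ereal (f y) + \<phi> y \<ge> ereal psibar"
begin

abbreviation "Fnor \<equiv> F_nor lam \<phi> gf"
abbreviation "\<xi> \<equiv> xi_const L lam"
abbreviation "H \<equiv> H_merit \<xi> lam f gf \<phi>"
abbreviation "G \<equiv> L + 1 / lam"

lemma G_pos: "G > 0"
  using L_pos lam_pos by (simp add: add_pos_pos)

lemma xi_pos: "\<xi> > 0" and xi_le_half: "\<xi> \<le> 1 / 2" and xi_eq: "\<xi> * (1 + lam^2 * L^2) = 1 / 2"
  using xi_const_bounds[OF L_pos lam_pos] by simp_all

lemma F_nor_lipschitz: "norm (Fnor y1 - Fnor y2) \<le> G * norm (y1 - y2)"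
proof -
  have "Fnor y1 - Fnor y2 = (gf (p y1) - gf (p y2)) + (1 / lam) *\<^sub>R ((y1 - p y1) - (y2 - p y2))"
    unfolding F_nor_def by (simp add: algebra_simps)
  then have "norm (Fnor y1 - Fnor y2)
      \<le> norm (gf (p y1) - gf (p y2)) + norm ((1 / lam) *\<^sub>R ((y1 - p y1) - (y2 - p y2)))"
    by (metis norm_triangle_ineq)
  also have "\<dots> = norm (gf (p y1) - gf (p y2)) + (1 / lam) * norm ((y1 - p y1) - (y2 - p y2))"
    using lam_pos by simp
  also have "\<dots> \<le> L * norm (y1 - y2) + (1 / lam) * norm (y1 - y2)"
  proof (rule add_mono)
    show "norm (gf (p y1) - gf (p y2)) \<le> L * norm (y1 - y2)"
      using gf_lipschitz[of "p y1" "p y2"] prox_nonexpansive[of y1 y2] L_pos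
      by (meson mult_left_mono order_trans less_imp_le)
    show "(1 / lam) * norm ((y1 - p y1) - (y2 - p y2)) \<le> (1 / lam) * norm (y1 - y2)"
      using prox_residual_nonexpansive[of y1 y2] lam_pos by (intro mult_left_mono) auto
  qed
  finally show ?thesis by (simp add: algebra_simps)
qed

lemma norm_F_nat_prox_le: "norm (F_nat lam \<phi> gf (p z)) \<le> lam * norm (Fnor z)"
proof -
  have "p z - lam *\<^sub>R gf (p z) = z - lam *\<^sub>R Fnor z"
    unfolding F_nor_def using lam_pos by (simp add: algebra_simps)
  then have "norm (F_nat lam \<phi> gf (p z)) = norm (p z - p (z - lam *\<^sub>R Fnor z))"
    unfolding F_nat_def by simp
  also have "\<dots> \<le> norm (z - (z - lam *\<^sub>R Fnor z))" by (rule prox_nonexpansive)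
  also have "\<dots> = lam * norm (Fnor z)" using lam_pos by simp
  finally show ?thesis .
qed

lemma H_merit_ge: "psibar \<le> H y"
proof -
  obtain r where "\<phi> (p y) = ereal r" using prox_finite not_MInfty by (cases "\<phi> (p y)") auto
  then have "psibar \<le> f (p y) + real_of_ereal (\<phi> (p y))"
    using psi_lower_bound[OF prox_finite, of y] by simp
  moreover have "0 \<le> \<xi> * lam / 2 * (norm (Fnor y))^2" using xi_pos lam_pos by simp
  ultimately show ?thesis unfolding H_merit_def by simp
qed

lemma psi_prox_difference_le:
  "f (p y') + real_of_ereal (\<phi> (p y')) - (f (p y) + real_of_ereal (\<phi> (p y)))
     \<le> Fnor y \<bullet> (p y' - p y) + ((y' - y) \<bullet> (p y' - p y) - norm (p y' - p y)^2) / lam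
        + L * norm (p y' - p y)^2"
proof -
  define x x' d where "x = p y" and "x' = p y'" and "d = p y' - p y"
  have "real_of_ereal (\<phi> x') + (y' - x') \<bullet> (x - x') / lam \<le> real_of_ereal (\<phi> x)"
    unfolding x_def x'_def by (rule prox_variational_inequality[OF prox_finite])
  moreover have "(y' - x') \<bullet> (x - x') = - ((y - x) \<bullet> d) - ((y' - y) \<bullet> d - norm d^2)"
    unfolding x_def x'_def d_def
    by (simp add: power2_norm_eq_inner inner_diff_left inner_diff_right inner_commute algebra_simps)
  ultimately have "real_of_ereal (\<phi> x') - real_of_ereal (\<phi> x)
      \<le> (y - x) \<bullet> d / lam + ((y' - y) \<bullet> d - norm d^2) / lam"
    by (simp add: diff_divide_distrib)
  moreover have "f x' \<le> f x + gf x \<bullet> d + L * norm d^2"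
    unfolding x_def x'_def d_def
    using lipschitz_gradient_upper_bound[OF f_grad gf_lipschitz] L_pos by simp
  moreover have "Fnor y \<bullet> d = gf x \<bullet> d + (y - x) \<bullet> d / lam"
    unfolding x_def F_nor_def by (simp add: inner_add_left)
  ultimately show ?thesis unfolding x_def x'_def d_def by linarith
qed

end

lemma young_mult_le:
  fixes a b e :: real
  assumes "e > 0"
  shows "a * b \<le> a^2 / (4 * e) + e * b^2"
proof -
  have "0 \<le> (a - 2 * e * b)^2" by simp
  then have "4 * e * (a * b) \<le> a^2 + 4 * e^2 * b^2" by (simp add: power2_eq_square algebra_simps)
  then show ?thesis using assms by (simp add: field_simps power2_eq_square)
qed

lemma norm_add_sq_le:
  fixes a b :: "'a::real_normed_vector"
  shows "norm (a + b)^2 \<le> 2 * norm a^2 + 2 * norm b^2"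
proof -
  have "norm (a + b)^2 \<le> (norm a + norm b)^2" by (simp add: power_mono norm_triangle_ineq)
  also have "\<dots> \<le> 2 * norm a^2 + 2 * norm b^2"
    using zero_le_power2[of "norm a - norm b"] by (simp add: power2_eq_square algebra_simps)
  finally show ?thesis .
qed

lemma norm_add3_sq_le:
  fixes a b c :: "'a::real_normed_vector"
  shows "norm (a + b + c)^2 \<le> 3 * norm a^2 + 3 * norm b^2 + 3 * norm c^2"
proof -
  have "norm (a + b + c) \<le> norm a + norm b + norm c"
    by (meson add_mono norm_triangle_ineq order_refl order_trans)
  then have "norm (a + b + c)^2 \<le> (norm a + norm b + norm c)^2" by (simp add: power_mono)
  also have "\<dots> \<le> 3 * norm a^2 + 3 * norm b^2 + 3 * norm c^2"
    using zero_le_power2[of "norm a - norm b"] zero_le_power2[of "norm b - norm c"]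
      zero_le_power2[of "norm a - norm c"]
    by (simp add: power2_eq_square algebra_simps)
  finally show ?thesis .
qed

lemma descent_coefficients:
  fixes \<alpha> lam L \<xi> :: real
  assumes pos: "\<alpha> > 0" "lam > 0" "L > 0" "\<xi> > 0" "\<xi> \<le> 1/2"
    and xi: "\<xi> * (1 + lam^2 * L^2) = 1/2"
    and a1: "\<alpha> \<le> 1 / (8 * (L + 1/lam))" and a2: "\<alpha> \<le> lam / 12"
  shows "L + 3/2 * \<xi> * lam * L^2 + 3/2 * \<xi> / lam - 1 / (4 * \<alpha>) \<le> 0"
    and "3 * \<xi> * \<alpha>^2 / lam - \<xi> * \<alpha> / 4 \<le> 0"
    and "\<alpha> + \<xi> * \<alpha> + 3 * \<xi> * \<alpha>^2 / lam \<le> 2 * \<alpha>"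
proof -
  have "2 * (lam * L) \<le> 1 + lam^2 * L^2"
    using zero_le_power2[of "lam * L - 1"] by (simp add: power2_eq_square algebra_simps)
  then have "\<xi> * (2 * (lam * L)) \<le> 1/2" using pos xi by (metis mult_left_mono less_imp_le)
  then have "\<xi> * lam * L * L \<le> L / 4" using pos by (simp add: field_simps)
  then have k1: "\<xi> * lam * L^2 \<le> L / 4" by (simp add: power2_eq_square mult.assoc)
  have k2: "\<xi> / lam \<le> 1/2 * (1 / lam)" using pos by (simp add: field_simps)
  have "8 * (L + 1/lam) * \<alpha> \<le> 1" using a1 pos by (simp add: field_simps add_pos_pos)
  then have k3: "2 * L + 2 * (1 / lam) \<le> 1 / (4 * \<alpha>)" using pos by (simp add: field_simps)
  have "0 < 1 / lam" using pos by simp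
  then have "L + 3/2 * (\<xi> * lam * L^2) + 3/2 * (\<xi> / lam) \<le> 1 / (4 * \<alpha>)"
    using k1 k2 k3 pos by linarith
  then show "L + 3/2 * \<xi> * lam * L^2 + 3/2 * \<xi> / lam - 1 / (4 * \<alpha>) \<le> 0"
    by (simp add: algebra_simps)
  have "3 * \<alpha> / lam \<le> 1/4" using a2 pos by (simp add: field_simps)
  then have k4: "\<xi> * \<alpha> * (3 * \<alpha> / lam) \<le> \<xi> * \<alpha> * (1/4)" using pos by (intro mult_left_mono) auto
  then show c2: "3 * \<xi> * \<alpha>^2 / lam - \<xi> * \<alpha> / 4 \<le> 0" by (simp add: power2_eq_square)
  have "\<xi> * \<alpha> \<le> 1/2 * \<alpha>" using pos by (intro mult_right_mono) auto
  then show "\<alpha> + \<xi> * \<alpha> + 3 * \<xi> * \<alpha>^2 / lam \<le> 2 * \<alpha>"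
    using c2 pos by linarith
qed

(* With xi (1 + lam^2 L^2) = 1/2 the D^2-terms produced by Young's inequality add up to
   -D^2 / (4 alpha), which absorbs the remaining ones for small alpha. *)
lemma descent_quadratic_form_le:
  fixes \<alpha> lam L \<xi> A D E :: real
  assumes pos: "\<alpha> > 0" "lam > 0" "L > 0" "\<xi> > 0" "\<xi> \<le> 1/2"
    and xi: "\<xi> * (1 + lam^2 * L^2) = 1/2"
    and nn: "A \<ge> 0" "D \<ge> 0" "E \<ge> 0"
    and a1: "\<alpha> \<le> 1 / (8 * (L + 1/lam))" and a2: "\<alpha> \<le> lam / 12"
  shows "- (1 - \<xi>) / \<alpha> * D^2 + E * D + L * D^2 + \<xi> * lam * L * A * D
           - \<xi> * \<alpha> * A^2 + \<xi> * \<alpha> * A * E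
           + 3/2 * \<xi> * lam * (L^2 * D^2 + (2 * \<alpha>^2 * (A^2 + E^2) + D^2) / lam^2)
         \<le> - (\<xi> / 4) * \<alpha> * A^2 + 2 * \<alpha> * E^2"
    (is "?lhs \<le> ?rhs")
proof -
  note c = descent_coefficients[OF assms(1-6) a1 a2]
  have "E * D \<le> D^2 / (4 * \<alpha>) + \<alpha> * E^2"
    using young_mult_le[OF pos(1), of D E] by (simp add: mult.commute)
  moreover have "\<xi> * lam * L * A * D \<le> \<xi> * \<alpha> * A^2 / 4 + (1/2 - \<xi>) / \<alpha> * D^2"
  proof -
    have "A * (lam * L * D) \<le> A^2 / (4 * (1 / \<alpha>)) + 1 / \<alpha> * (lam * L * D)^2"
      using pos by (intro young_mult_le) simp
    then have "\<xi> * (A * (lam * L * D)) \<le> \<xi> * (A^2 / (4 * (1 / \<alpha>)) + 1 / \<alpha> * (lam * L * D)^2)"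
      using pos by (intro mult_left_mono) auto
    also have "\<dots> = \<xi> * \<alpha> * A^2 / 4 + (\<xi> * lam^2 * L^2) / \<alpha> * D^2"
      using pos by (simp add: field_simps power2_eq_square)
    also have "\<xi> * lam^2 * L^2 = 1/2 - \<xi>" using xi by (simp add: algebra_simps)
    finally show ?thesis by (simp add: algebra_simps)
  qed
  moreover have "\<xi> * \<alpha> * A * E \<le> \<xi> * \<alpha> * A^2 / 4 + \<xi> * \<alpha> * E^2"
  proof -
    have "A * E \<le> A^2 / 4 + E^2" using young_mult_le[of 1 A E] by simp
    then have "\<xi> * \<alpha> * (A * E) \<le> \<xi> * \<alpha> * (A^2 / 4 + E^2)"
      using pos by (intro mult_left_mono) auto
    then show ?thesis by (simp add: algebra_simps)
  qed
  ultimately have "?lhs \<le> - (1 - \<xi>) / \<alpha> * D^2 + (D^2 / (4 * \<alpha>) + \<alpha> * E^2) + L * D^2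
      + (\<xi> * \<alpha> * A^2 / 4 + (1/2 - \<xi>) / \<alpha> * D^2) - \<xi> * \<alpha> * A^2
      + (\<xi> * \<alpha> * A^2 / 4 + \<xi> * \<alpha> * E^2)
      + 3/2 * \<xi> * lam * (L^2 * D^2 + (2 * \<alpha>^2 * (A^2 + E^2) + D^2) / lam^2)"
    by linarith
  also have "\<dots> = (L + 3/2 * \<xi> * lam * L^2 + 3/2 * \<xi> / lam - 1 / (4 * \<alpha>)) * D^2
      + (3 * \<xi> * \<alpha>^2 / lam - \<xi> * \<alpha> / 4) * A^2 - (\<xi> / 4) * \<alpha> * A^2
      + (\<alpha> + \<xi> * \<alpha> + 3 * \<xi> * \<alpha>^2 / lam) * E^2"
    using pos by (simp add: field_simps power2_eq_square)
  also have "\<dots> \<le> 0 + 0 - (\<xi> / 4) * \<alpha> * A^2 + 2 * \<alpha> * E^2"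
    using c pos by (intro add_mono diff_mono mult_nonpos_nonneg mult_right_mono) auto
  finally show ?thesis by simp
qed

context composite
begin

lemma merit_difference_le:
  "H y' - H y \<le> (1 - \<xi>) * (Fnor y \<bullet> (p y' - p y))
      + ((y' - y) \<bullet> (p y' - p y) - norm (p y' - p y)^2) / lam + L * norm (p y' - p y)^2
      + \<xi> * lam * (Fnor y \<bullet> (gf (p y') - gf (p y))) + \<xi> * (Fnor y \<bullet> (y' - y))
      + \<xi> * lam / 2 * norm (Fnor y' - Fnor y)^2"
proof -
  define F W where "F = Fnor y" and "W = Fnor y' - Fnor y"
  have "Fnor y' = F + W" unfolding F_def W_def by simp
  then have "H y' - H y = f (p y') + real_of_ereal (\<phi> (p y')) - (f (p y) + real_of_ereal (\<phi> (p y)))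
      + \<xi> * lam * (F \<bullet> W) + \<xi> * lam / 2 * norm W^2"
    unfolding H_merit_def F_def
    by (simp add: power2_norm_eq_inner inner_add_left inner_add_right inner_commute algebra_simps)
  moreover have W: "W = (gf (p y') - gf (p y)) + (1 / lam) *\<^sub>R ((y' - y) - (p y' - p y))"
    unfolding W_def F_nor_def by (simp add: algebra_simps)
  have "\<xi> * lam * (F \<bullet> W) = \<xi> * lam * (F \<bullet> (gf (p y') - gf (p y))) + \<xi> * (F \<bullet> (y' - y))
      - \<xi> * (F \<bullet> (p y' - p y))"
    unfolding W using lam_pos by (simp add: inner_add_right inner_diff_right algebra_simps)
  ultimately show ?thesis
    using psi_prox_difference_le[of y' y] unfolding F_def W_def by (simp add: algebra_simps)
qed

lemma norm_F_nor_diff_sq_le: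
  "norm (Fnor y' - Fnor y)^2
     \<le> 3 * (L^2 * norm (p y' - p y)^2) + 3 * (norm (y' - y)^2 / lam^2) + 3 * (norm (p y' - p y)^2 / lam^2)"
proof -
  have "Fnor y' - Fnor y = (gf (p y') - gf (p y)) + (1 / lam) *\<^sub>R (y' - y) + (- (1 / lam) *\<^sub>R (p y' - p y))"
    unfolding F_nor_def by (simp add: algebra_simps)
  then have "norm (Fnor y' - Fnor y)^2 \<le> 3 * norm (gf (p y') - gf (p y))^2
      + 3 * norm ((1 / lam) *\<^sub>R (y' - y))^2 + 3 * norm (- (1 / lam) *\<^sub>R (p y' - p y))^2"
    by (metis norm_add3_sq_le)
  moreover have "norm (gf (p y') - gf (p y))^2 \<le> L^2 * norm (p y' - p y)^2"
    using gf_lipschitz[of "p y'" "p y"] by (metis norm_ge_zero power_mono power_mult_distrib)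
  ultimately show ?thesis using lam_pos by (simp add: power_divide)
qed

lemma descent_cross_terms_le:
  assumes \<alpha>: "\<alpha> > 0" "\<alpha> \<le> lam / 12" and y': "y' = y - \<alpha> *\<^sub>R (Fnor y + \<delta>)"
  shows "(1 - \<xi>) * (Fnor y \<bullet> (p y' - p y)) + ((y' - y) \<bullet> (p y' - p y) - norm (p y' - p y)^2) / lam
    \<le> - (1 - \<xi>) / \<alpha> * norm (p y' - p y)^2 + norm \<delta> * norm (p y' - p y)"
proof -
  define d u c where "d = p y' - p y" and "u = y' - y" and "c = (1 - \<xi>) / \<alpha> - 1 / lam"
  have Fd: "Fnor y \<bullet> d = - (u \<bullet> d) / \<alpha> - \<delta> \<bullet> d"
    using \<alpha> unfolding u_def y' by (simp add: inner_add_left inner_diff_left field_simps)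
  have "1/2 * lam \<le> (1 - \<xi>) * lam" using lam_pos xi_le_half by (intro mult_right_mono) auto
  then have "\<alpha> \<le> (1 - \<xi>) * lam" using \<alpha>(2) lam_pos by linarith
  then have "1 / lam \<le> (1 - \<xi>) / \<alpha>" using \<alpha>(1) lam_pos by (simp add: field_simps)
  then have "c * norm d^2 \<le> c * (u \<bullet> d)"
    unfolding c_def d_def u_def by (intro mult_left_mono prox_firmly_nonexpansive) auto
  moreover have "- ((1 - \<xi>) * (\<delta> \<bullet> d)) \<le> norm \<delta> * norm d"
  proof -
    have "(1 - \<xi>) * (- (\<delta> \<bullet> d)) \<le> (1 - \<xi>) * (norm \<delta> * norm d)"
      using xi_le_half Cauchy_Schwarz_ineq2[of \<delta> d] by (intro mult_left_mono) auto
    moreover have "0 \<le> \<xi> * (norm \<delta> * norm d)" using xi_pos by simp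
    ultimately show ?thesis by (simp add: algebra_simps)
  qed
  moreover have "(1 - \<xi>) * (Fnor y \<bullet> d) + (u \<bullet> d - norm d^2) / lam
      = - (c * (u \<bullet> d)) - (1 - \<xi>) * (\<delta> \<bullet> d) - norm d^2 / lam"
    unfolding c_def Fd using \<alpha> lam_pos by (simp add: field_simps)
  moreover have "- (c * norm d^2) - norm d^2 / lam = - (1 - \<xi>) / \<alpha> * norm d^2"
    unfolding c_def using \<alpha> lam_pos by (simp add: field_simps)
  ultimately show ?thesis unfolding d_def u_def by linarith
qed

lemma merit_descent_step:
  assumes \<alpha>: "\<alpha> > 0" "\<alpha> \<le> 1 / (8 * G)" "\<alpha> \<le> lam / 12"
    and y': "y' = y - \<alpha> *\<^sub>R (Fnor y + \<delta>)"
  shows "H y' \<le> H y - \<xi> / 4 * \<alpha> * norm (Fnor y)^2 + 2 * \<alpha> * norm \<delta>^2"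
proof -
  define A D E where "A = norm (Fnor y)" and "D = norm (p y' - p y)" and "E = norm \<delta>"
  have u: "y' - y = - \<alpha> *\<^sub>R (Fnor y + \<delta>)" unfolding y' by simp
  have "\<xi> * lam * (Fnor y \<bullet> (gf (p y') - gf (p y))) \<le> \<xi> * lam * L * A * D"
  proof -
    have "Fnor y \<bullet> (gf (p y') - gf (p y)) \<le> A * norm (gf (p y') - gf (p y))"
      unfolding A_def by (rule Cauchy_Schwarz_ineq2[THEN abs_le_D1])
    also have "\<dots> \<le> A * (L * D)" unfolding A_def D_def using gf_lipschitz by (intro mult_left_mono) auto
    finally have "\<xi> * lam * (Fnor y \<bullet> (gf (p y') - gf (p y))) \<le> \<xi> * lam * (A * (L * D))"
      using xi_pos lam_pos by (intro mult_left_mono) auto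
    then show ?thesis by (simp add: mult_ac)
  qed
  moreover have "\<xi> * (Fnor y \<bullet> (y' - y)) \<le> - \<xi> * \<alpha> * A^2 + \<xi> * \<alpha> * A * E"
  proof -
    have "\<xi> * \<alpha> * (- (Fnor y \<bullet> \<delta>)) \<le> \<xi> * \<alpha> * (A * E)"
      unfolding A_def E_def using xi_pos \<alpha> Cauchy_Schwarz_ineq2[of "Fnor y" \<delta>]
      by (intro mult_left_mono) auto
    then show ?thesis unfolding u A_def by (simp add: inner_add_right power2_norm_eq_inner algebra_simps)
  qed
  moreover have "\<xi> * lam / 2 * norm (Fnor y' - Fnor y)^2
      \<le> 3/2 * \<xi> * lam * (L^2 * D^2 + (2 * \<alpha>^2 * (A^2 + E^2) + D^2) / lam^2)"
  proof -
    have "norm (y' - y)^2 = \<alpha>^2 * norm (Fnor y + \<delta>)^2" unfolding u by (simp add: power_mult_distrib)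
    also have "\<dots> \<le> \<alpha>^2 * (2 * A^2 + 2 * E^2)"
      unfolding A_def E_def by (intro mult_left_mono norm_add_sq_le) auto
    finally have "norm (y' - y)^2 / lam^2 \<le> 2 * \<alpha>^2 * (A^2 + E^2) / lam^2"
      by (intro divide_right_mono) (auto simp: algebra_simps)
    then have "norm (Fnor y' - Fnor y)^2
        \<le> 3 * (L^2 * D^2) + 3 * (2 * \<alpha>^2 * (A^2 + E^2) / lam^2) + 3 * (D^2 / lam^2)"
      using norm_F_nor_diff_sq_le[of y' y] unfolding D_def by linarith
    then have "\<xi> * lam / 2 * norm (Fnor y' - Fnor y)^2
        \<le> \<xi> * lam / 2 * (3 * (L^2 * D^2) + 3 * (2 * \<alpha>^2 * (A^2 + E^2) / lam^2) + 3 * (D^2 / lam^2))"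
      using xi_pos lam_pos by (intro mult_left_mono) auto
    then show ?thesis by (simp add: add_divide_distrib algebra_simps)
  qed
  moreover have "- (1 - \<xi>) / \<alpha> * D^2 + E * D + L * D^2 + \<xi> * lam * L * A * D
           - \<xi> * \<alpha> * A^2 + \<xi> * \<alpha> * A * E
           + 3/2 * \<xi> * lam * (L^2 * D^2 + (2 * \<alpha>^2 * (A^2 + E^2) + D^2) / lam^2)
         \<le> - (\<xi> / 4) * \<alpha> * A^2 + 2 * \<alpha> * E^2"
    using \<alpha> lam_pos L_pos xi_pos xi_le_half xi_eq
    by (intro descent_quadratic_form_le) (auto simp: A_def D_def E_def)
  ultimately show ?thesis
    using merit_difference_le[of y' y] descent_cross_terms_le[OF \<alpha>(1,3) y']
    unfolding A_def D_def E_def by linarith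
qed

end

section \<open>Pathwise estimate\<close>

primrec damped_noise :: "real \<Rightarrow> (nat \<Rightarrow> real) \<Rightarrow> (nat \<Rightarrow> 'a::real_vector) \<Rightarrow> nat \<Rightarrow> 'a" where
  "damped_noise c a e 0 = 0"
| "damped_noise c a e (Suc n) = (1 - c * a n) *\<^sub>R damped_noise c a e n + a n *\<^sub>R e n"

context composite
begin

lemma merit_telescope:
  assumes y: "\<And>n. y (Suc n) = y n - \<alpha> n *\<^sub>R (Fnor (y n) + \<delta> n)"
    and \<alpha>: "\<And>n. 0 < \<alpha> n" "\<And>n. \<alpha> n \<le> T_const L lam / 5"
  shows "H (y n) \<le> H (y 0) - \<xi> / 4 * (\<Sum>i<n. \<alpha> i * norm (Fnor (y i))^2)
                   + 2 * (\<Sum>i<n. \<alpha> i * norm (\<delta> i)^2)"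
proof (induction n)
  case (Suc n)
  have "H (y (Suc n)) \<le> H (y n) - \<xi> / 4 * \<alpha> n * norm (Fnor (y n))^2 + 2 * \<alpha> n * norm (\<delta> n)^2"
    using step_size_bounds[OF L_pos lam_pos \<alpha>(1,2)] by (intro merit_descent_step[OF \<alpha>(1) _ _ y]) auto
  with Suc show ?case by (simp add: algebra_simps)
qed simp

lemma shift_error_sq_le: "norm (Fnor z - Fnor (z + s) + G *\<^sub>R s)^2 \<le> 4 * G^2 * norm s^2"
proof -
  have "norm (Fnor z - Fnor (z + s)) \<le> G * norm s"
    using F_nor_lipschitz[of z "z + s"] by simp
  moreover have "norm (G *\<^sub>R s) = G * norm s" using G_pos by simp
  ultimately have "norm (Fnor z - Fnor (z + s) + G *\<^sub>R s) \<le> 2 * (G * norm s)"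
    using norm_triangle_ineq[of "Fnor z - Fnor (z + s)" "G *\<^sub>R s"] by linarith
  from power_mono[OF this, of 2] show ?thesis by (simp add: power_mult_distrib)
qed

lemma norm_F_nat_prox_sq_le_shift:
  "norm (F_nat lam \<phi> gf (p z))^2 \<le> lam^2 * (2 * norm (Fnor (z + s))^2 + 2 * G^2 * norm s^2)"
proof -
  have "norm (F_nat lam \<phi> gf (p z))^2 \<le> (lam * norm (Fnor z))^2"
    by (intro power_mono norm_F_nat_prox_le) simp
  also have "\<dots> = lam^2 * norm (Fnor (z + s) + (Fnor z - Fnor (z + s)))^2"
    by (simp add: power_mult_distrib)
  also have "\<dots> \<le> lam^2 * (2 * norm (Fnor (z + s))^2 + 2 * (G * norm s)^2)"
    using norm_add_sq_le[of "Fnor (z + s)" "Fnor z - Fnor (z + s)"]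
      power_mono[OF F_nor_lipschitz[of z "z + s"], of 2]
    by (intro mult_left_mono) auto
  finally show ?thesis by (simp add: power_mult_distrib mult.assoc)
qed

lemma weighted_residual_pathwise_bound:
  assumes z: "\<And>n. z (Suc n) = z n - \<alpha> n *\<^sub>R (Fnor (z n) + e n)"
    and \<alpha>: "\<And>n. 0 < \<alpha> n" "\<And>n. \<alpha> n \<le> T_const L lam / 5"
  shows "(\<Sum>i<k. \<alpha> i * norm (F_nat lam \<phi> gf (p (z i)))^2)
     \<le> 8 * lam^2 / \<xi> * (H (z 0) - psibar)
        + 65 * lam^2 * G^2 / \<xi> * (\<Sum>i<k. \<alpha> i * norm (damped_noise G \<alpha> e i)^2)"
proof -
  define S where "S = damped_noise G \<alpha> e"
  define y where "y n = z n + S n" for n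
  define \<delta> where "\<delta> n = Fnor (z n) - Fnor (y n) + G *\<^sub>R S n" for n
  define SF where "SF = (\<Sum>i<k. \<alpha> i * norm (Fnor (y i))^2)"
  define SS where "SS = (\<Sum>i<k. \<alpha> i * norm (S i)^2)"
  have \<alpha>_nonneg: "0 \<le> \<alpha> i" for i using \<alpha>(1) less_imp_le by blast
  have SS_nonneg: "0 \<le> SS" unfolding SS_def using \<alpha>_nonneg by (intro sum_nonneg) auto
  have y_step: "y (Suc n) = y n - \<alpha> n *\<^sub>R (Fnor (y n) + \<delta> n)" for n
    unfolding y_def \<delta>_def S_def z by (simp add: algebra_simps)
  have "(\<Sum>i<k. \<alpha> i * norm (\<delta> i)^2) \<le> (\<Sum>i<k. \<alpha> i * (4 * G^2 * norm (S i)^2))"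
    unfolding \<delta>_def y_def using \<alpha>_nonneg shift_error_sq_le by (intro sum_mono mult_left_mono) auto
  also have "\<dots> = 4 * (G^2 * SS)" unfolding SS_def by (simp add: sum_distrib_left algebra_simps)
  finally have "(\<Sum>i<k. \<alpha> i * norm (\<delta> i)^2) \<le> 4 * (G^2 * SS)" .
  moreover have "psibar \<le> H (y k)" by (rule H_merit_ge)
  moreover have "H (y 0) = H (z 0)" unfolding y_def S_def by simp
  ultimately have "\<xi> / 4 * SF \<le> H (z 0) - psibar + 8 * (G^2 * SS)"
    using merit_telescope[where y = y and \<alpha> = \<alpha> and \<delta> = \<delta>, OF y_step \<alpha>, of k]
    unfolding SF_def by linarith
  then have SF: "SF \<le> 4 / \<xi> * (H (z 0) - psibar) + 32 * G^2 / \<xi> * SS"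
    using xi_pos by (simp add: field_simps)
  have "(\<Sum>i<k. \<alpha> i * norm (F_nat lam \<phi> gf (p (z i)))^2)
      \<le> (\<Sum>i<k. \<alpha> i * (lam^2 * (2 * norm (Fnor (y i))^2 + 2 * G^2 * norm (S i)^2)))"
    unfolding y_def using \<alpha>_nonneg norm_F_nat_prox_sq_le_shift by (intro sum_mono mult_left_mono) auto
  also have "\<dots> = 2 * lam^2 * SF + 2 * lam^2 * G^2 * SS"
    unfolding SF_def SS_def by (simp add: sum_distrib_left sum.distrib algebra_simps)
  also have "\<dots> \<le> 2 * lam^2 * (4 / \<xi> * (H (z 0) - psibar) + 32 * G^2 / \<xi> * SS)
      + lam^2 * G^2 / \<xi> * SS"
  proof (rule add_mono)
    show "2 * lam^2 * SF \<le> 2 * lam^2 * (4 / \<xi> * (H (z 0) - psibar) + 32 * G^2 / \<xi> * SS)"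
      using SF by (intro mult_left_mono) auto
    have "2 \<le> 1 / \<xi>" using xi_pos xi_le_half by (simp add: field_simps)
    then show "2 * lam^2 * G^2 * SS \<le> lam^2 * G^2 / \<xi> * SS"
      using SS_nonneg mult_right_mono[of 2 "1 / \<xi>" "lam^2 * G^2 * SS"] by (simp add: algebra_simps)
  qed
  also have "\<dots> = 8 * lam^2 / \<xi> * (H (z 0) - psibar) + 65 * lam^2 * G^2 / \<xi> * SS"
    by (simp add: field_simps)
  finally show ?thesis unfolding SS_def S_def .
qed

end

section \<open>The stochastic iteration\<close>

lemma abs_inner_Basis_mult_le:
  fixes u v :: "'a::euclidean_space"
  shows "b \<in> Basis \<Longrightarrow> \<bar>u \<bullet> b\<bar> * \<bar>v \<bullet> b\<bar> \<le> norm u * norm v"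
  by (intro mult_mono Basis_le_norm) auto

locale normal_map_spg = composite \<phi> lam f gf L psibar
  for \<phi> :: "'a::euclidean_space \<Rightarrow> ereal" and lam f gf L psibar +
  fixes M :: "'w measure" and Fs :: "nat \<Rightarrow> 'w measure" and \<alpha> \<sigma> :: "nat \<Rightarrow> real"
    and z0 :: 'a and z x g :: "nat \<Rightarrow> 'w \<Rightarrow> 'a"
  assumes prob: "prob_space M"
    and filt_sub: "\<And>n. subalgebra M (Fs n)"
    and filt_mono: "\<And>n. sets (Fs n) \<subseteq> sets (Fs (Suc n))"
    and z_init: "\<And>\<omega>. z 0 \<omega> = z0"
    and z_step: "\<And>n \<omega>. z (Suc n) \<omega> = z n \<omega> - \<alpha> n *\<^sub>R (g n \<omega> + grad_env lam \<phi> (z n \<omega>))"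
    and x_def: "\<And>n \<omega>. x n \<omega> = prox lam \<phi> (z n \<omega>)"
    and g_meas: "\<And>n. g n \<in> borel_measurable (Fs (Suc n))"
    and g_integrable: "\<And>n b. b \<in> Basis \<Longrightarrow> integrable M (\<lambda>\<omega>. g n \<omega> \<bullet> b)"
    and g_unbiased: "\<And>n b. b \<in> Basis \<Longrightarrow>
          AE \<omega> in M. real_cond_exp M (Fs n) (\<lambda>\<omega>. g n \<omega> \<bullet> b) \<omega> = gf (x n \<omega>) \<bullet> b"
    and g_variance: "\<And>n. (\<integral>\<^sup>+ \<omega>. ennreal ((norm (g n \<omega> - gf (x n \<omega>)))^2) \<partial>M) \<le> ennreal ((\<sigma> n)^2)"
    and \<alpha>_pos: "\<And>n. \<alpha> n > 0"
    and \<alpha>_le: "\<And>n. \<alpha> n \<le> T_const L lam / 5"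
begin

definition noise :: "nat \<Rightarrow> 'w \<Rightarrow> 'a" where
  "noise n \<omega> = g n \<omega> - gf (x n \<omega>)"

definition S :: "nat \<Rightarrow> 'w \<Rightarrow> 'a" where
  "S n \<omega> = damped_noise G \<alpha> (\<lambda>i. noise i \<omega>) n"

lemma S_0: "S 0 = (\<lambda>\<omega>. 0)" and S_Suc: "S (Suc n) = (\<lambda>\<omega>. (1 - G * \<alpha> n) *\<^sub>R S n \<omega> + \<alpha> n *\<^sub>R noise n \<omega>)"
  unfolding S_def by auto

lemma z_Suc_noise: "z (Suc n) \<omega> = z n \<omega> - \<alpha> n *\<^sub>R (Fnor (z n \<omega>) + noise n \<omega>)"
  unfolding z_step noise_def F_nor_def grad_env_def x_def by (simp add: algebra_simps)

lemma borel_measurable_gf[measurable]: "gf \<in> borel_measurable borel"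
  by (intro borel_measurable_continuous_onI lipschitz_on_continuous_on[where L = L] lipschitz_onI)
    (auto simp: dist_norm L_pos less_imp_le gf_lipschitz)

lemma borel_measurable_grad_env[measurable]: "grad_env lam \<phi> \<in> borel_measurable borel"
  unfolding grad_env_def[abs_def] by measurable

lemma borel_measurable_F_nat[measurable]: "F_nat lam \<phi> gf \<in> borel_measurable borel"
  unfolding F_nat_def[abs_def] by measurable

lemma space_Fs: "space (Fs n) = space M"
  using filt_sub[of n] unfolding subalgebra_def by simp

lemma subalgebra_Fs_Suc: "subalgebra (Fs (Suc n)) (Fs n)"
  unfolding subalgebra_def using filt_mono[of n] space_Fs by simp

lemma z_adapted: "z n \<in> borel_measurable (Fs n)"
proof (induction n)
  case 0
  have "z 0 = (\<lambda>\<omega>. z0)" using z_init by (rule ext)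
  then show ?case by simp
next
  case (Suc n)
  have [measurable]: "z n \<in> borel_measurable (Fs (Suc n))"
    by (rule measurable_from_subalg[OF subalgebra_Fs_Suc Suc])
  have [measurable]: "g n \<in> borel_measurable (Fs (Suc n))" by (rule g_meas)
  have "z (Suc n) = (\<lambda>\<omega>. z n \<omega> - \<alpha> n *\<^sub>R (g n \<omega> + grad_env lam \<phi> (z n \<omega>)))"
    using z_step by (rule ext)
  also have "\<dots> \<in> borel_measurable (Fs (Suc n))" by measurable
  finally show ?case .
qed

lemma x_adapted[measurable]: "x n \<in> borel_measurable (Fs n)"
proof -
  have [measurable]: "z n \<in> borel_measurable (Fs n)" by (rule z_adapted)
  have "x n = (\<lambda>\<omega>. p (z n \<omega>))" using x_def by (rule ext)
  also have "\<dots> \<in> borel_measurable (Fs n)" by measurable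
  finally show ?thesis .
qed

lemma noise_adapted: "noise n \<in> borel_measurable (Fs (Suc n))"
proof -
  have [measurable]: "x n \<in> borel_measurable (Fs (Suc n))"
    by (rule measurable_from_subalg[OF subalgebra_Fs_Suc x_adapted])
  have [measurable]: "g n \<in> borel_measurable (Fs (Suc n))" by (rule g_meas)
  show ?thesis unfolding noise_def[abs_def] by measurable
qed

lemma S_adapted[measurable]: "S n \<in> borel_measurable (Fs n)"
proof (induction n)
  case (Suc n)
  have [measurable]: "S n \<in> borel_measurable (Fs (Suc n))"
    by (rule measurable_from_subalg[OF subalgebra_Fs_Suc Suc])
  have [measurable]: "noise n \<in> borel_measurable (Fs (Suc n))" by (rule noise_adapted)
  show ?case unfolding S_Suc by measurable
qed (simp add: S_0)

lemma borel_measurable_iterates[measurable]: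
  "z n \<in> borel_measurable M" "x n \<in> borel_measurable M" "noise n \<in> borel_measurable M"
  "S n \<in> borel_measurable M"
  by (rule measurable_from_subalg[OF filt_sub], rule z_adapted x_adapted noise_adapted S_adapted)+

lemma noise_sq_nn_integral_le:
  "(\<integral>\<^sup>+ \<omega>. ennreal (norm (noise n \<omega>)^2) \<partial>M) \<le> ennreal ((\<sigma> n)^2)"
  using g_variance unfolding noise_def by simp

lemma integrable_noise_sq: "integrable M (\<lambda>\<omega>. norm (noise n \<omega>)^2)"
proof (rule integrableI_bounded)
  have "(\<integral>\<^sup>+ \<omega>. ennreal (norm (norm (noise n \<omega>)^2)) \<partial>M) \<le> ennreal ((\<sigma> n)^2)"
    using noise_sq_nn_integral_le by simp
  then show "(\<integral>\<^sup>+ \<omega>. ennreal (norm (norm (noise n \<omega>)^2)) \<partial>M) < \<infinity>"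
    using le_less_trans by fastforce
qed measurable

lemma expectation_noise_sq_le: "(\<integral>\<omega>. norm (noise n \<omega>)^2 \<partial>M) \<le> (\<sigma> n)^2"
proof -
  have "ennreal (\<integral>\<omega>. norm (noise n \<omega>)^2 \<partial>M) = (\<integral>\<^sup>+ \<omega>. ennreal (norm (noise n \<omega>)^2) \<partial>M)"
    by (rule nn_integral_eq_integral[OF integrable_noise_sq, symmetric]) simp
  also have "\<dots> \<le> ennreal ((\<sigma> n)^2)" by (rule noise_sq_nn_integral_le)
  finally show ?thesis by (simp add: ennreal_le_iff)
qed

lemma integrable_noise_component:
  assumes b: "b \<in> Basis"
  shows "integrable M (\<lambda>\<omega>. noise n \<omega> \<bullet> b)"
proof -
  interpret prob_space M by (rule prob)
  show ?thesis
  proof (rule Bochner_Integration.integrable_bound)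
    show "integrable M (\<lambda>\<omega>. 1 + norm (noise n \<omega>)^2)" using integrable_noise_sq by simp
    have "\<bar>noise n \<omega> \<bullet> b\<bar> \<le> 1 + norm (noise n \<omega>)^2" for \<omega>
      using Basis_le_norm[OF b, of "noise n \<omega>"] zero_le_power2[of "norm (noise n \<omega>) - 1"]
      by (simp add: power2_eq_square algebra_simps)
    then show "AE \<omega> in M. norm (noise n \<omega> \<bullet> b) \<le> norm (1 + norm (noise n \<omega>)^2)" by simp
  qed measurable
qed

lemma integrable_S_sq: "integrable M (\<lambda>\<omega>. norm (S n \<omega>)^2)"
proof (induction n)
  case (Suc n)
  define c where "c = 1 - G * \<alpha> n"
  show ?case
  proof (rule Bochner_Integration.integrable_bound)
    show "integrable M (\<lambda>\<omega>. 2 * c^2 * norm (S n \<omega>)^2 + 2 * (\<alpha> n)^2 * norm (noise n \<omega>)^2)"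
      using Suc integrable_noise_sq by simp
    have "norm (S (Suc n) \<omega>)^2 \<le> 2 * c^2 * norm (S n \<omega>)^2 + 2 * (\<alpha> n)^2 * norm (noise n \<omega>)^2" for \<omega>
      using norm_add_sq_le[of "c *\<^sub>R S n \<omega>" "\<alpha> n *\<^sub>R noise n \<omega>"]
      unfolding S_Suc c_def by (simp add: power_mult_distrib)
    then show "AE \<omega> in M. norm (norm (S (Suc n) \<omega>)^2)
        \<le> norm (2 * c^2 * norm (S n \<omega>)^2 + 2 * (\<alpha> n)^2 * norm (noise n \<omega>)^2)"
      by simp
  qed measurable
qed (simp add: S_0)

lemma integrable_S_inner_bound:
  assumes "\<And>\<omega>. \<bar>h \<omega>\<bar> \<le> norm (S n \<omega>) * norm (noise n \<omega>)" "h \<in> borel_measurable M"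
  shows "integrable M h"
proof (rule Bochner_Integration.integrable_bound)
  show "integrable M (\<lambda>\<omega>. norm (S n \<omega>)^2 + norm (noise n \<omega>)^2)"
    using integrable_S_sq integrable_noise_sq by simp
  have "\<bar>h \<omega>\<bar> \<le> norm (S n \<omega>)^2 + norm (noise n \<omega>)^2" for \<omega>
    using assms(1)[of \<omega>] zero_le_power2[of "norm (S n \<omega>) - norm (noise n \<omega>)"]
      mult_nonneg_nonneg[of "norm (S n \<omega>)" "norm (noise n \<omega>)"]
    by (simp add: power2_eq_square algebra_simps)
  then show "AE \<omega> in M. norm (h \<omega>) \<le> norm (norm (S n \<omega>)^2 + norm (noise n \<omega>)^2)" by simp
qed (rule assms(2))

lemma sigma_finite_Fs: "sigma_finite_subalgebra M (Fs n)"
  using prob filt_sub[of n]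
  by (intro finite_measure_subalgebra_is_sigma_finite)
    (simp add: finite_measure_subalgebra_def finite_measure_subalgebra_axioms_def prob_space_def)

lemma noise_cond_exp_zero:
  assumes b: "b \<in> Basis"
  shows "AE \<omega> in M. real_cond_exp M (Fs n) (\<lambda>\<omega>. noise n \<omega> \<bullet> b) \<omega> = 0"
proof -
  interpret S: sigma_finite_subalgebra M "Fs n" by (rule sigma_finite_Fs)
  define h where "h \<omega> = gf (x n \<omega>) \<bullet> b" for \<omega>
  have h_meas: "h \<in> borel_measurable (Fs n)" unfolding h_def[abs_def] by measurable
  have noise_eq: "(\<lambda>\<omega>. noise n \<omega> \<bullet> b) = (\<lambda>\<omega>. g n \<omega> \<bullet> b - h \<omega>)"
    unfolding h_def noise_def by (simp add: inner_diff_left)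
  have h_int: "integrable M h"
  proof -
    have "h = (\<lambda>\<omega>. g n \<omega> \<bullet> b - noise n \<omega> \<bullet> b)" unfolding h_def noise_def by (simp add: inner_diff_left)
    then show ?thesis using g_integrable[OF b] integrable_noise_component[OF b] by simp
  qed
  have "AE \<omega> in M. real_cond_exp M (Fs n) (\<lambda>\<omega>. g n \<omega> \<bullet> b - h \<omega>) \<omega>
          = real_cond_exp M (Fs n) (\<lambda>\<omega>. g n \<omega> \<bullet> b) \<omega> - real_cond_exp M (Fs n) h \<omega>"
    by (rule S.real_cond_exp_diff[OF g_integrable[OF b] h_int])
  moreover have "AE \<omega> in M. real_cond_exp M (Fs n) (\<lambda>\<omega>. g n \<omega> \<bullet> b) \<omega> = h \<omega>"
    using g_unbiased[OF b] unfolding h_def .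
  moreover have "AE \<omega> in M. real_cond_exp M (Fs n) h \<omega> = h \<omega>"
    by (rule S.real_cond_exp_F_meas[OF h_int h_meas])
  ultimately show ?thesis unfolding noise_eq by eventually_elim simp
qed

lemma expectation_S_inner_noise: "(\<integral>\<omega>. S n \<omega> \<bullet> noise n \<omega> \<partial>M) = 0"
proof -
  interpret S: sigma_finite_subalgebra M "Fs n" by (rule sigma_finite_Fs)
  have int: "integrable M (\<lambda>\<omega>. (S n \<omega> \<bullet> b) * (noise n \<omega> \<bullet> b))" if b: "b \<in> Basis" for b
  proof (rule integrable_S_inner_bound[where n = n])
    show "(\<lambda>\<omega>. (S n \<omega> \<bullet> b) * (noise n \<omega> \<bullet> b)) \<in> borel_measurable M" by measurable
  qed (simp add: abs_mult abs_inner_Basis_mult_le[OF b])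
  have component: "(\<integral>\<omega>. (S n \<omega> \<bullet> b) * (noise n \<omega> \<bullet> b) \<partial>M) = 0" if b: "b \<in> Basis" for b
  proof -
    have S_b: "(\<lambda>\<omega>. S n \<omega> \<bullet> b) \<in> borel_measurable (Fs n)" by measurable
    have noise_b: "(\<lambda>\<omega>. noise n \<omega> \<bullet> b) \<in> borel_measurable M" by measurable
    have "(\<integral>\<omega>. (S n \<omega> \<bullet> b) * (noise n \<omega> \<bullet> b) \<partial>M)
        = (\<integral>\<omega>. (S n \<omega> \<bullet> b) * real_cond_exp M (Fs n) (\<lambda>\<omega>. noise n \<omega> \<bullet> b) \<omega> \<partial>M)"
      by (rule S.real_cond_exp_intg(2)[OF int[OF b] S_b noise_b, symmetric])
    also have "\<dots> = (\<integral>\<omega>. 0 \<partial>M)"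
    proof (rule integral_cong_AE)
      show "(\<lambda>\<omega>. (S n \<omega> \<bullet> b) * real_cond_exp M (Fs n) (\<lambda>\<omega>. noise n \<omega> \<bullet> b) \<omega>)
          \<in> borel_measurable M" by measurable
      show "AE \<omega> in M. (S n \<omega> \<bullet> b) * real_cond_exp M (Fs n) (\<lambda>\<omega>. noise n \<omega> \<bullet> b) \<omega> = 0"
        using noise_cond_exp_zero[OF b, of n] by eventually_elim simp
    qed simp
    finally show ?thesis by simp
  qed
  have "(\<integral>\<omega>. S n \<omega> \<bullet> noise n \<omega> \<partial>M) = (\<integral>\<omega>. (\<Sum>b\<in>Basis. (S n \<omega> \<bullet> b) * (noise n \<omega> \<bullet> b)) \<partial>M)"
    by (simp add: euclidean_inner[of "S n _" "noise n _"])
  also have "\<dots> = (\<Sum>b\<in>Basis. (\<integral>\<omega>. (S n \<omega> \<bullet> b) * (noise n \<omega> \<bullet> b) \<partial>M))"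
    using int by (rule Bochner_Integration.integral_sum)
  also have "\<dots> = 0" using component by simp
  finally show ?thesis .
qed

end

context normal_map_spg
begin

lemma integrable_S_inner_noise: "integrable M (\<lambda>\<omega>. S n \<omega> \<bullet> noise n \<omega>)"
  by (rule integrable_S_inner_bound[where n = n]) (simp add: Cauchy_Schwarz_ineq2, measurable)

definition S_moment :: "nat \<Rightarrow> real" where
  "S_moment n = (\<integral>\<omega>. norm (S n \<omega>)^2 \<partial>M)"

lemma S_moment_Suc_le: "S_moment (Suc n) \<le> (1 - G * \<alpha> n) * S_moment n + (\<alpha> n)^2 * (\<sigma> n)^2"
proof -
  define c where "c = 1 - G * \<alpha> n"
  have c: "0 \<le> c" "c \<le> 1"
    unfolding c_def using step_size_bounds(3)[OF L_pos lam_pos \<alpha>_pos \<alpha>_le, of n] G_pos \<alpha>_pos[of n]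
    by auto
  have "norm (S (Suc n) \<omega>)^2
      = c^2 * norm (S n \<omega>)^2 + 2 * c * \<alpha> n * (S n \<omega> \<bullet> noise n \<omega>) + (\<alpha> n)^2 * norm (noise n \<omega>)^2"
    for \<omega>
    unfolding S_Suc c_def[symmetric]
    by (simp only: power2_norm_eq_inner)
      (simp add: inner_add_left inner_add_right inner_commute algebra_simps power2_eq_square)
  then have "S_moment (Suc n) = c^2 * S_moment n + 2 * c * \<alpha> n * (\<integral>\<omega>. S n \<omega> \<bullet> noise n \<omega> \<partial>M)
      + (\<alpha> n)^2 * (\<integral>\<omega>. norm (noise n \<omega>)^2 \<partial>M)"
    unfolding S_moment_def
    using integrable_S_sq integrable_noise_sq integrable_S_inner_noise by simp
  also have "\<dots> = c^2 * S_moment n + (\<alpha> n)^2 * (\<integral>\<omega>. norm (noise n \<omega>)^2 \<partial>M)"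
    using expectation_S_inner_noise by simp
  also have "\<dots> \<le> c * S_moment n + (\<alpha> n)^2 * (\<sigma> n)^2"
  proof (rule add_mono)
    show "c^2 * S_moment n \<le> c * S_moment n"
      using c by (intro mult_right_mono) (auto simp: power2_eq_square mult_left_le_one_le S_moment_def)
    show "(\<alpha> n)^2 * (\<integral>\<omega>. norm (noise n \<omega>)^2 \<partial>M) \<le> (\<alpha> n)^2 * (\<sigma> n)^2"
      by (intro mult_left_mono expectation_noise_sq_le) simp
  qed
  finally show ?thesis unfolding c_def .
qed

lemma S_moment_weighted_sum_le: "G * (\<Sum>i<k. \<alpha> i * S_moment i) \<le> (\<Sum>i<k. (\<alpha> i)^2 * (\<sigma> i)^2)"
proof -
  have "S_moment k + G * (\<Sum>i<k. \<alpha> i * S_moment i) \<le> (\<Sum>i<k. (\<alpha> i)^2 * (\<sigma> i)^2)"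
  proof (induction k)
    case (Suc k)
    then show ?case using S_moment_Suc_le[of k] by (simp add: algebra_simps)
  qed (simp add: S_moment_def S_0)
  moreover have "0 \<le> S_moment k" unfolding S_moment_def by simp
  ultimately show ?thesis by linarith
qed

lemma expected_weighted_residual_le:
  "(\<Sum>i<k. ennreal (\<alpha> i) * (\<integral>\<^sup>+ \<omega>. ennreal (norm (F_nat lam \<phi> gf (x i \<omega>))^2) \<partial>M))
     \<le> ennreal (8 * lam^2 / \<xi> * (H z0 - psibar) + 65 * lam^2 * G / \<xi> * (\<Sum>i<k. (\<alpha> i)^2 * (\<sigma> i)^2))"
proof -
  interpret prob_space M by (rule prob)
  define A where "A = 8 * lam^2 / \<xi> * (H z0 - psibar)"
  define B where "B = 65 * lam^2 * G^2 / \<xi>"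
  have \<alpha>_nonneg: "0 \<le> \<alpha> i" for i using \<alpha>_pos less_imp_le by blast
  have A: "0 \<le> A" unfolding A_def using H_merit_ge[of z0] xi_pos by simp
  have B: "0 \<le> B" unfolding B_def using xi_pos by simp
  have "(\<Sum>i<k. ennreal (\<alpha> i) * (\<integral>\<^sup>+ \<omega>. ennreal (norm (F_nat lam \<phi> gf (x i \<omega>))^2) \<partial>M))
      = (\<integral>\<^sup>+ \<omega>. (\<Sum>i<k. ennreal (\<alpha> i) * ennreal (norm (F_nat lam \<phi> gf (x i \<omega>))^2)) \<partial>M)"
    by (subst nn_integral_sum) (auto intro!: sum.cong nn_integral_cmult[symmetric])
  also have "\<dots> = (\<integral>\<^sup>+ \<omega>. ennreal (\<Sum>i<k. \<alpha> i * norm (F_nat lam \<phi> gf (x i \<omega>))^2) \<partial>M)"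
    using \<alpha>_nonneg by (intro nn_integral_cong) (simp add: sum_ennreal[symmetric] ennreal_mult)
  also have "\<dots> \<le> (\<integral>\<^sup>+ \<omega>. ennreal (A + B * (\<Sum>i<k. \<alpha> i * norm (S i \<omega>)^2)) \<partial>M)"
  proof (intro nn_integral_mono ennreal_leI)
    fix \<omega>
    show "(\<Sum>i<k. \<alpha> i * norm (F_nat lam \<phi> gf (x i \<omega>))^2) \<le> A + B * (\<Sum>i<k. \<alpha> i * norm (S i \<omega>)^2)"
      using weighted_residual_pathwise_bound[of "\<lambda>n. z n \<omega>" \<alpha> "\<lambda>n. noise n \<omega>" k]
        z_Suc_noise \<alpha>_pos \<alpha>_le
      unfolding A_def B_def S_def x_def z_init by simp
  qed
  also have "\<dots> = ennreal (A + B * (\<Sum>i<k. \<alpha> i * S_moment i))"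
  proof -
    have "integrable M (\<lambda>\<omega>. A + B * (\<Sum>i<k. \<alpha> i * norm (S i \<omega>)^2))"
      using integrable_S_sq by simp
    moreover have "AE \<omega> in M. 0 \<le> A + B * (\<Sum>i<k. \<alpha> i * norm (S i \<omega>)^2)"
      using A B \<alpha>_nonneg by (intro AE_I2 add_nonneg_nonneg mult_nonneg_nonneg sum_nonneg) auto
    ultimately show ?thesis
      using integrable_S_sq by (simp add: nn_integral_eq_integral S_moment_def prob_space)
  qed
  also have "\<dots> \<le> ennreal (A + B / G * (\<Sum>i<k. (\<alpha> i)^2 * (\<sigma> i)^2))"
  proof (rule ennreal_leI)
    have "(\<Sum>i<k. \<alpha> i * S_moment i) \<le> (\<Sum>i<k. (\<alpha> i)^2 * (\<sigma> i)^2) / G"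
      using S_moment_weighted_sum_le[of k] G_pos by (simp add: field_simps)
    then show "A + B * (\<Sum>i<k. \<alpha> i * S_moment i) \<le> A + B / G * (\<Sum>i<k. (\<alpha> i)^2 * (\<sigma> i)^2)"
      using B mult_left_mono by fastforce
  qed
  also have "B / G = 65 * lam^2 * G / \<xi>" unfolding B_def using G_pos by (simp add: power2_eq_square)
  finally show ?thesis unfolding A_def .
qed

end

lemma Min_le_weighted_average:
  fixes a :: "nat \<Rightarrow> ennreal" and w :: "nat \<Rightarrow> real"
  assumes k: "k \<ge> 1" and w: "\<And>i. 0 < w i" and B: "0 \<le> B"
    and le: "(\<Sum>i<k. ennreal (w i) * a i) \<le> ennreal B"
  shows "Min (a ` {..<k}) \<le> ennreal (B / (\<Sum>i<k. w i))"
proof -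
  define W where "W = (\<Sum>i<k. w i)"
  have "0 \<in> {..<k}" using k by simp
  then have W: "W > 0" using w unfolding W_def by (intro sum_pos) auto
  have "ennreal W = (\<Sum>i<k. ennreal (w i))"
    unfolding W_def by (rule sum_ennreal[symmetric]) (use w in \<open>auto intro: less_imp_le\<close>)
  then have "ennreal W * Min (a ` {..<k}) = (\<Sum>i<k. ennreal (w i) * Min (a ` {..<k}))"
    by (simp only: sum_distrib_right)
  also have "\<dots> \<le> (\<Sum>i<k. ennreal (w i) * a i)" by (intro sum_mono mult_left_mono Min_le) auto
  finally have "ennreal W * Min (a ` {..<k}) \<le> ennreal B" using le by simp
  then have "ennreal (1 / W) * (ennreal W * Min (a ` {..<k})) \<le> ennreal (1 / W) * ennreal B"
    by (rule mult_left_mono) simp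
  moreover have "ennreal (1 / W) * (ennreal W * Min (a ` {..<k})) = Min (a ` {..<k})"
    using W by (simp add: ennreal_mult[symmetric] mult.assoc[symmetric])
  moreover have "ennreal (1 / W) * ennreal B = ennreal (B / W)"
    using W B by (simp add: ennreal_mult[symmetric])
  ultimately have "Min (a ` {..<k}) \<le> ennreal (B / W)" by simp
  then show ?thesis unfolding W_def .
qed

theorem theorem2p15:
  fixes M :: "'w measure" and F :: "nat \<Rightarrow> 'w measure"
    and \<phi> :: "'a::euclidean_space \<Rightarrow> ereal" and f :: "'a \<Rightarrow> real" and gf :: "'a \<Rightarrow> 'a"
    and lam L psibar :: real and alpha sigma :: "nat \<Rightarrow> real"
    and z0 :: 'a and z x g :: "nat \<Rightarrow> 'w \<Rightarrow> 'a" and k :: nat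
  assumes prob: "prob_space M"
    and filt_sub: "\<And>n. subalgebra M (F n)"
    and filt_mono: "\<And>n. sets (F n) \<subseteq> sets (F (Suc n))"
    and phi_convex: "ext_convex \<phi>" and phi_lsc: "ext_lsc \<phi>" and phi_proper: "ext_proper \<phi>"
    and f_grad: "\<And>y. (f has_derivative (\<lambda>h. gf y \<bullet> h)) (at y)"
    and gf_cont: "continuous_on UNIV gf"
    and lam_pos: "lam > 0"
    and z_init: "\<And>\<omega>. z 0 \<omega> = z0"
    and z_step: "\<And>n \<omega>. z (Suc n) \<omega> = z n \<omega> - alpha n *\<^sub>R (g n \<omega> + grad_env lam \<phi> (z n \<omega>))"
    and x_def: "\<And>n \<omega>. x n \<omega> = prox lam \<phi> (z n \<omega>)"
    and g_meas: "\<And>n. g n \<in> borel_measurable (F (Suc n))"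
    \<comment> \<open>(A.1)\<close>
    and A1: "\<And>y. \<phi> y \<noteq> \<infinity> \<Longrightarrow> ereal (f y) + \<phi> y \<ge> ereal psibar"
    \<comment> \<open>(A.2)\<close>
    and A2_int: "\<And>n b. b \<in> Basis \<Longrightarrow> integrable M (\<lambda>\<omega>. g n \<omega> \<bullet> b)"
    and A2_unbiased: "\<And>n b. b \<in> Basis \<Longrightarrow>
          AE \<omega> in M. real_cond_exp M (F n) (\<lambda>\<omega>. g n \<omega> \<bullet> b) \<omega> = gf (x n \<omega>) \<bullet> b"
    and A2_var: "\<And>n. sigma n \<ge> 0"
    and A2_bound: "\<And>n. (\<integral>\<^sup>+ \<omega>. ennreal ((norm (g n \<omega> - gf (x n \<omega>)))^2) \<partial>M) \<le> ennreal ((sigma n)^2)"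
    \<comment> \<open>(A.3)\<close>
    and A3_div: "\<not> summable alpha" and A3_lim: "alpha \<longlonglongrightarrow> 0"
    \<comment> \<open>(B.1)\<close>
    and L_pos: "L > 0"
    and B1: "\<And>y y'. norm (gf y - gf y') \<le> L * norm (y - y')"
    \<comment> \<open>step sizes\<close>
    and alpha_pos: "\<And>n. alpha n > 0"
    and alpha_le: "\<And>n. alpha n \<le> T_const L lam / 5"
    and k_pos: "k \<ge> 1"
  shows "Min ((\<lambda>i. \<integral>\<^sup>+ \<omega>. ennreal ((norm (F_nat lam \<phi> gf (x i \<omega>)))^2) \<partial>M) ` {..<k})
     \<le> ennreal (
        (10 * (1 + lam * lambar_const L lam)^2 * lam^2 / xi_const L lam)
          * (H_merit (xi_const L lam) lam f gf \<phi> z0 - psibar) / (\<Sum>i<k. alpha i)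
      + max (200 * (1 + lam * lambar_const L lam)^2 * lam^2 / (T_const L lam * xi_const L lam))
            (8 * lam^2 * (lambar_const L lam)^2 * T_const L lam)
          * (\<Sum>i<k. (alpha i)^2 * (sigma i)^2) / (\<Sum>i<k. alpha i))"
proof -
  interpret normal_map_spg \<phi> lam f gf L psibar M F alpha sigma z0 z x g
    by (intro normal_map_spg.intro composite.intro proximal.intro composite_axioms.intro
        normal_map_spg_axioms.intro) (fact assms)+
  have H0: "0 \<le> H z0 - psibar" using H_merit_ge[of z0] by simp
  have "Min ((\<lambda>i. \<integral>\<^sup>+ \<omega>. ennreal ((norm (F_nat lam \<phi> gf (x i \<omega>)))^2) \<partial>M) ` {..<k})
      \<le> ennreal ((8 * lam^2 / \<xi> * (H z0 - psibar) + 65 * lam^2 * G / \<xi> * (\<Sum>i<k. (alpha i)^2 * (sigma i)^2))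
          / (\<Sum>i<k. alpha i))"
    using H0 xi_pos lam_pos G_pos
    by (intro Min_le_weighted_average[OF k_pos alpha_pos _ expected_weighted_residual_le])
      (simp add: sum_nonneg)
  also have "\<dots> \<le> ennreal (
        (10 * (1 + lam * lambar_const L lam)^2 * lam^2 / \<xi>) * (H z0 - psibar) / (\<Sum>i<k. alpha i)
      + max (200 * (1 + lam * lambar_const L lam)^2 * lam^2 / (T_const L lam * \<xi>))
            (8 * lam^2 * (lambar_const L lam)^2 * T_const L lam)
          * (\<Sum>i<k. (alpha i)^2 * (sigma i)^2) / (\<Sum>i<k. alpha i))"
    using H0 alpha_pos
    by (intro ennreal_leI residual_estimate_le[OF L_pos lam_pos] sum_nonneg) (auto simp: less_imp_le)
  finally show ?thesis .
qed

end
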